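(* Consider the $K$-class $N$-agent system and mean-field model described in the context, with constants $M_R,L_R,L_P,L_Q>0$ and discount factor $\gamma\in[0,1)$. Let $\mathbf{x}_0^{\mathbf{N}}$ be given (deterministic) initial states of all agents and $\boldsymbol{\mu}_0\in\mathcal{P}(\mathcal{X}\times[K])$ their empirical joint distribution. Define $S_R= M_R(1+L_Q)+L_R(2+L_Q)$, $S_P= (1+L_Q)+L_P(2+L_Q)$, $C_R= M_R+L_R$, $C_P= 2+L_P$. If $\gamma S_P<1$, then for every policy $\boldsymbol{\pi}\in\Pi$, $$\Big|v^{\mathbf{N}}(\mathbf{x}_0^{\mathbf{N}},\boldsymbol{\pi})-v^{\mathrm{MF}}(\boldsymbol{\mu}_0,\boldsymbol{\pi})\Big|\le \frac{C_R}{1-\gamma}\sqrt{|\mathcal{U}|}\,\frac{1}{N_{\mathrm{pop}}}\Big(\sum_{k\in[K]}\sqrt{N_k}\Big)+C_P\Big(\frac{S_R}{S_P-1}\Big)\sqrt{|\mathcal{X}||\mathcal{U}|}\,\frac{1}{N_{\mathrm{pop}}}\Big(\sum_{k\in[K]}\sqrt{N_k}\Big)\Big[\frac{1}{1-\gamma S_P}-\frac{1}{1-\gamma}\Big].$$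
   Context: Fix integers $K\ge1$, $N_1,\dots,N_K\ge1$, write $[K]=\{1,\dots,K\}$, $N_{\mathrm{pop}}=\sum_{k}N_k$, $\mathbf{N}=(N_k)_k$, and let $\mathcal{X},\mathcal{U}$ be finite state and action sets. For a finite set $A$, $\mathcal{P}(A)$ is the set of probability distributions on $A$, and $|\cdot|_1$ is the $L_1$ norm. Agent $j\in[N_k]$ of class $k$ has state $x_{j,k}^{t}\in\mathcal{X}$ and action $u_{j,k}^{t}\in\mathcal{U}$ at time $t\in\{0,1,\dots\}$; $\mathbf{x}_t^{\mathbf{N}},\mathbf{u}_t^{\mathbf{N}}$ denote all states/actions at time $t$. Empirical joint distributions: $\boldsymbol{\mu}_t^{\mathbf{N}}(x,k)=\frac{1}{N_{\mathrm{pop}}}\sum_{j=1}^{N_k}\mathbf 1(x_{j,k}^t=x)$, $\boldsymbol{\nu}_t^{\mathbf{N}}(u,k)=\frac{1}{N_{\mathrm{pop}}}\sum_{j=1}^{N_k}\mathbf 1(u_{j,k}^t=u)$, elements of $\mathcal{P}(\mathcal{X}\times[K])$ and $\mathcal{P}(\mathcal{U}\times[K])$. For each $k$ there are a reward function $r_k:\mathcal{X}\times\mathcal{U}\times\mathcal{P}(\mathcal{X}\times[K])\times\mathcal{P}(\mathcal{U}\times[K])\to\mathbb{R}$ and a transition law $P_k:\mathcal{X}\times\mathcal{U}\times\mathcal{P}(\mathcal{X}\times[K])\times\mathcal{P}(\mathcal{U}\times[K])\to\mathcal{P}(\mathcal{X})$ such that for all $x,u,k,\boldsymbol\mu_1,\boldsymbol\mu_2,\boldsymbol\nu_1,\boldsymbol\nu_2$: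 $|r_k(x,u,\boldsymbol\mu_1,\boldsymbol\nu_1)|\le M_R$, $|r_k(x,u,\boldsymbol\mu_1,\boldsymbol\nu_1)-r_k(x,u,\boldsymbol\mu_2,\boldsymbol\nu_2)|\le L_R(|\boldsymbol\mu_1-\boldsymbol\mu_2|_1+|\boldsymbol\nu_1-\boldsymbol\nu_2|_1)$, $|P_k(x,u,\boldsymbol\mu_1,\boldsymbol\nu_1)-P_k(x,u,\boldsymbol\mu_2,\boldsymbol\nu_2)|_1\le L_P(|\boldsymbol\mu_1-\boldsymbol\mu_2|_1+|\boldsymbol\nu_1-\boldsymbol\nu_2|_1)$. A policy is $\boldsymbol\pi=\{\boldsymbol\pi_t\}_{t\ge0}$, $\boldsymbol\pi_t=(\pi_k^t)_{k\in[K]}$, with decision rules $\pi_k^t:\mathcal{X}\times\mathcal{P}(\mathcal{X}\times[K])\to\mathcal{P}(\mathcal{U})$. $\Pi$ is the set of policies with $|\pi_k^t(x,\boldsymbol\mu_1)-\pi_k^t(x,\boldsymbol\mu_2)|_1\le L_Q|\boldsymbol\mu_1-\boldsymbol\mu_2|_1$ for all $t,k,x,\boldsymbol\mu_1,\boldsymbol\mu_2$. Dynamics of the $\mathbf N$-agent system under $\boldsymbol\pi$: conditioned on $\mathbf{x}_t^{\mathbf{N}}$, actions are drawn independently across agents with $u_{j,k}^t\sim\pi_k^t(x_{j,k}^t,\boldsymbol\mu_t^{\mathbf N})$; conditioned on $\mathbf{x}_t^{\mathbf{N}},\mathbf{u}_t^{\mathbf{N}}$, next states are drawn independently across agents with $x_{j,k}^{t+1}\sim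 P_k(x_{j,k}^t,u_{j,k}^t,\boldsymbol\mu_t^{\mathbf N},\boldsymbol\nu_t^{\mathbf N})$. Empirical value: $v^{\mathbf N}(\mathbf x_0^{\mathbf N},\boldsymbol\pi)=\frac{1}{N_{\mathrm{pop}}}\sum_k\sum_{j=1}^{N_k}\mathbb E\big[\sum_{t\ge0}\gamma^t r_k(x_{j,k}^t,u_{j,k}^t,\boldsymbol\mu_t^{\mathbf N},\boldsymbol\nu_t^{\mathbf N})\big]$. Mean-field operators for $\boldsymbol\mu\in\mathcal P(\mathcal X\times[K])$ and a collection $\boldsymbol\pi=(\pi_k)_k$ of decision rules: $\nu^{\mathrm{MF}}(\boldsymbol\mu,\boldsymbol\pi)(u,k)=\sum_x\pi_k(x,\boldsymbol\mu)(u)\boldsymbol\mu(x,k)$; $P^{\mathrm{MF}}(\boldsymbol\mu,\boldsymbol\pi)(x',k)=\sum_{x,u}\boldsymbol\mu(x,k)\pi_k(x,\boldsymbol\mu)(u)P_k(x,u,\boldsymbol\mu,\nu^{\mathrm{MF}}(\boldsymbol\mu,\boldsymbol\pi))(x')$; $r_k^{\mathrm{MF}}(\boldsymbol\mu,\boldsymbol\pi)=\sum_{x,u}\boldsymbol\mu(x,k)\pi_k(x,\boldsymbol\mu)(u)r_k(x,u,\boldsymbol\mu,\nu^{\mathrm{MF}}(\boldsymbol\mu,\boldsymbol\pi))$. Mean-field value: with $\boldsymbol\mu_{t+1}=P^{\mathrm{MF}}(\boldsymbol\mu_t,\boldsymbol\pi_t)$, $v^{\mathrm{MF}}(\boldsymbol\mu_0,\boldsymbol\pi)=\sum_k\sum_{t\ge0}\gamma^t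 r_k^{\mathrm{MF}}(\boldsymbol\mu_t,\boldsymbol\pi_t)$. *)

theory Defs
  imports "HOL-Probability.Probability"
begin

(* Classes [K] are the elements of a finite type 'k (K = CARD('k)); states 'x and
   actions 'u are finite types. Agent j of class k is indexed by (k, j), j \<in> {1..N k}.
   Distributions on X \<times> [K] (resp. U \<times> [K]) are real functions on 'x \<times> 'k. *)

definition dist_simplex :: "('a::finite \<Rightarrow> real) set" where
  "dist_simplex = {\<mu>. (\<forall>z. 0 \<le> \<mu> z) \<and> (\<Sum>z\<in>UNIV. \<mu> z) = 1}"

definition l1 :: "('a::finite \<Rightarrow> real) \<Rightarrow> ('a \<Rightarrow> real) \<Rightarrow> real" where
  "l1 f g = (\<Sum>z\<in>UNIV. \<bar>f z - g z\<bar>)"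

definition l1_pmf :: "'a::finite pmf \<Rightarrow> 'a pmf \<Rightarrow> real" where
  "l1_pmf p q = (\<Sum>z\<in>UNIV. \<bar>pmf p z - pmf q z\<bar>)"

definition Npop :: "('k::finite \<Rightarrow> nat) \<Rightarrow> nat" where
  "Npop N = (\<Sum>k\<in>UNIV. N k)"

definition agents :: "('k::finite \<Rightarrow> nat) \<Rightarrow> ('k \<times> nat) set" where
  "agents N = (SIGMA k:UNIV. {1..N k})"

definition emp :: "('k::finite \<Rightarrow> nat) \<Rightarrow> ('k \<times> nat \<Rightarrow> 'a) \<Rightarrow> ('a \<times> 'k \<Rightarrow> real)" where
  "emp N c = (\<lambda>(a, k). (\<Sum>j\<in>{1..N k}. if c (k, j) = a then 1 else 0) / real (Npop N))"

type_synonym ('x,'k) dmeas = "'x \<times> 'k \<Rightarrow> real"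
type_synonym ('x,'u,'k) policy = "nat \<Rightarrow> 'k \<Rightarrow> 'x \<Rightarrow> ('x,'k) dmeas \<Rightarrow> 'u pmf"
type_synonym ('x,'u,'k) trans = "'k \<Rightarrow> 'x \<Rightarrow> 'u \<Rightarrow> ('x,'k) dmeas \<Rightarrow> ('u,'k) dmeas \<Rightarrow> 'x pmf"
type_synonym ('x,'u,'k) rew = "'k \<Rightarrow> 'x \<Rightarrow> 'u \<Rightarrow> ('x,'k) dmeas \<Rightarrow> ('u,'k) dmeas \<Rightarrow> real"

definition Pi_class :: "real \<Rightarrow> ('x::finite,'u::finite,'k::finite) policy set" where
  "Pi_class LQ = {\<pi>. \<forall>t k x \<mu>1 \<mu>2. \<mu>1 \<in> dist_simplex \<longrightarrow> \<mu>2 \<in> dist_simplex \<longrightarrow>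
      l1_pmf (\<pi> t k x \<mu>1) (\<pi> t k x \<mu>2) \<le> LQ * l1 \<mu>1 \<mu>2}"

definition act_pmf :: "('k::finite \<Rightarrow> nat) \<Rightarrow> ('x,'u,'k) policy \<Rightarrow> nat \<Rightarrow> ('k \<times> nat \<Rightarrow> 'x)
    \<Rightarrow> ('k \<times> nat \<Rightarrow> 'u) pmf" where
  "act_pmf N \<pi> t xs = Pi_pmf (agents N) undefined
     (\<lambda>(k, j). \<pi> t k (xs (k, j)) (emp N xs))"

definition next_pmf :: "('k::finite \<Rightarrow> nat) \<Rightarrow> ('x,'u,'k) trans \<Rightarrow> ('k \<times> nat \<Rightarrow> 'x)
    \<Rightarrow> ('k \<times> nat \<Rightarrow> 'u) \<Rightarrow> ('k \<times> nat \<Rightarrow> 'x) pmf" where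
  "next_pmf N P xs us = Pi_pmf (agents N) undefined
     (\<lambda>(k, j). P k (xs (k, j)) (us (k, j)) (emp N xs) (emp N us))"

primrec joint_dist :: "('k::finite \<Rightarrow> nat) \<Rightarrow> ('x,'u,'k) trans \<Rightarrow> ('x,'u,'k) policy
    \<Rightarrow> ('k \<times> nat \<Rightarrow> 'x) \<Rightarrow> nat \<Rightarrow> (('k \<times> nat \<Rightarrow> 'x) \<times> ('k \<times> nat \<Rightarrow> 'u)) pmf" where
  "joint_dist N P \<pi> x0 0 = map_pmf (\<lambda>us. (x0, us)) (act_pmf N \<pi> 0 x0)"
| "joint_dist N P \<pi> x0 (Suc t) =
     bind_pmf (joint_dist N P \<pi> x0 t) (\<lambda>(xs, us).
       bind_pmf (next_pmf N P xs us) (\<lambda>xs'.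
         map_pmf (\<lambda>us'. (xs', us')) (act_pmf N \<pi> (Suc t) xs')))"

(* empirical value; E[\<Sum>_t \<gamma>^t r] written as \<Sum>_t \<gamma>^t E[r] (bounded rewards) *)
definition vN :: "('k::finite \<Rightarrow> nat) \<Rightarrow> ('x::finite,'u::finite,'k) trans \<Rightarrow> ('x,'u,'k) rew
    \<Rightarrow> real \<Rightarrow> ('k \<times> nat \<Rightarrow> 'x) \<Rightarrow> ('x,'u,'k) policy \<Rightarrow> real" where
  "vN N P r \<gamma> x0 \<pi> = (1 / real (Npop N)) *
     (\<Sum>k\<in>UNIV. \<Sum>j\<in>{1..N k}. \<Sum>t. \<gamma> ^ t *
        measure_pmf.expectation (joint_dist N P \<pi> x0 t)
          (\<lambda>(xs, us). r k (xs (k, j)) (us (k, j)) (emp N xs) (emp N us)))"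

definition nu_MF :: "('x::finite,'k::finite) dmeas \<Rightarrow> ('k \<Rightarrow> 'x \<Rightarrow> ('x,'k) dmeas \<Rightarrow> 'u pmf)
    \<Rightarrow> ('u,'k) dmeas" where
  "nu_MF \<mu> \<pi> = (\<lambda>(u, k). \<Sum>x\<in>UNIV. pmf (\<pi> k x \<mu>) u * \<mu> (x, k))"

definition P_MF :: "('x,'u,'k) trans \<Rightarrow> ('x::finite,'k::finite) dmeas
    \<Rightarrow> ('k \<Rightarrow> 'x \<Rightarrow> ('x,'k) dmeas \<Rightarrow> 'u::finite pmf) \<Rightarrow> ('x,'k) dmeas" where
  "P_MF P \<mu> \<pi> = (\<lambda>(x', k). \<Sum>x\<in>UNIV. \<Sum>u\<in>UNIV.
      \<mu> (x, k) * pmf (\<pi> k x \<mu>) u * pmf (P k x u \<mu> (nu_MF \<mu> \<pi>)) x')"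

definition r_MF :: "('x,'u,'k) rew \<Rightarrow> 'k \<Rightarrow> ('x::finite,'k::finite) dmeas
    \<Rightarrow> ('k \<Rightarrow> 'x \<Rightarrow> ('x,'k) dmeas \<Rightarrow> 'u::finite pmf) \<Rightarrow> real" where
  "r_MF r k \<mu> \<pi> = (\<Sum>x\<in>UNIV. \<Sum>u\<in>UNIV.
      \<mu> (x, k) * pmf (\<pi> k x \<mu>) u * r k x u \<mu> (nu_MF \<mu> \<pi>))"

primrec mf_seq :: "('x,'u,'k) trans \<Rightarrow> ('x::finite,'k::finite) dmeas \<Rightarrow> ('x,'u::finite,'k) policy
    \<Rightarrow> nat \<Rightarrow> ('x,'k) dmeas" where
  "mf_seq P \<mu>0 \<pi> 0 = \<mu>0"
| "mf_seq P \<mu>0 \<pi> (Suc t) = P_MF P (mf_seq P \<mu>0 \<pi> t) (\<pi> t)"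

definition vMF :: "('x::finite,'u::finite,'k::finite) trans \<Rightarrow> ('x,'u,'k) rew \<Rightarrow> real
    \<Rightarrow> ('x,'k) dmeas \<Rightarrow> ('x,'u,'k) policy \<Rightarrow> real" where
  "vMF P r \<gamma> \<mu>0 \<pi> = (\<Sum>k\<in>UNIV. \<Sum>t. \<gamma> ^ t * r_MF r k (mf_seq P \<mu>0 \<pi> t) (\<pi> t))"

end

(*
  Let e_t be the expected L1 distance between the empirical state distribution of the
  N-agent system at time t and the mean-field flow mu_t.  Given the states, the agents'
  actions are independent, and given the actions, so are their next states.  A second-moment
  bound therefore puts each empirical distribution on a finite set B within
  sqrt |B| * A, A = (sum_k sqrt N_k) / N_pop, of the average of the agents' laws, in
  expected L1 distance.  Together with the Lipschitz continuity of the mean-field operators,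
  with constants S_R and S_P, this gives e_(t+1) <= S_P e_t + (2 sqrt |X| + L_P sqrt |U|) A
  and a gap of at most L_R sqrt |U| A + S_R e_t between the expected rewards at time t.
  So e_t grows at most geometrically with ratio S_P, and summing the reward gaps with the
  discount gamma, gamma S_P < 1, gives the bound.
*)
theory Submission
  imports Defs
begin

section \<open>Finite pmfs and sums of independent variables\<close>

lemma finite_set_pmf_Pi_pmf:
  fixes p :: "'i \<Rightarrow> 'b::finite pmf"
  assumes "finite I"
  shows "finite (set_pmf (Pi_pmf I d p))"
  using assms by (simp add: set_Pi_pmf finite_PiE_dflt)

lemma expectation_bind_pmf_finite:
  fixes f :: "'b \<Rightarrow> real"
  assumes p: "finite (set_pmf p)" and q: "\<And>x. x \<in> set_pmf p \<Longrightarrow> finite (set_pmf (q x))"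
  shows "measure_pmf.expectation (bind_pmf p q) f =
    measure_pmf.expectation p (\<lambda>x. measure_pmf.expectation (q x) f)"
  by (simp add: pmf_expectation_bind[OF p q order_refl] integral_measure_pmf[OF p] mult.commute)

lemma sum_pmf_UNIV: "(\<Sum>y\<in>UNIV. pmf p y) = 1"
  for p :: "'a::finite pmf"
  by (simp add: sum_pmf_eq_1)

lemma expectation_finite_type:
  fixes p :: "'a::finite pmf" and f :: "'a \<Rightarrow> real"
  shows "measure_pmf.expectation p f = (\<Sum>y\<in>UNIV. pmf p y * f y)"
  by (subst integral_measure_pmf_real[where A = UNIV]) (auto simp: mult.commute)

lemma pmf_bind_finite_type:
  fixes p :: "'a::finite pmf"
  shows "pmf (bind_pmf p K) b = (\<Sum>a\<in>UNIV. pmf p a * pmf (K a) b)"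
  by (simp add: pmf_bind expectation_finite_type)

lemma expectation_Pi_pmf_component:
  fixes F :: "'b \<Rightarrow> real"
  assumes "finite I" "i \<in> I"
  shows "measure_pmf.expectation (Pi_pmf I d p) (\<lambda>\<omega>. F (\<omega> i)) = measure_pmf.expectation (p i) F"
  using Pi_pmf_component[OF assms(1), of i d p] assms(2)
  by (metis integral_map_pmf)

(* The sign conditions are only needed by the library's expectation_prod_Pi_pmf. *)
lemma expectation_Pi_pmf_mult_components:
  fixes p :: "'i \<Rightarrow> 'b::finite pmf" and g h :: "'b \<Rightarrow> real"
  assumes fin: "finite I" and "i \<in> I" "l \<in> I" "i \<noteq> l"
    and "\<And>y. 0 \<le> g y" "\<And>y. 0 \<le> h y"
  shows "measure_pmf.expectation (Pi_pmf I d p) (\<lambda>\<omega>. g (\<omega> i) * h (\<omega> l))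
       = measure_pmf.expectation (p i) g * measure_pmf.expectation (p l) h"
proof -
  define f where "f x = (if x = i then g else if x = l then h else (\<lambda>_. 1))" for x
  have split: "(\<Prod>x\<in>I. F x) = F i * F l * (\<Prod>x\<in>I - {i} - {l}. F x)" for F :: "'i \<Rightarrow> real"
    using assms by (simp add: prod.remove[OF fin \<open>i \<in> I\<close>] prod.remove mult.assoc)
  have "measure_pmf.expectation (Pi_pmf I d p) (\<lambda>\<omega>. \<Prod>x\<in>I. f x (\<omega> x))
      = (\<Prod>x\<in>I. measure_pmf.expectation (p x) (f x))"
    using assms by (intro expectation_prod_Pi_pmf) (auto simp: f_def intro: integrable_measure_pmf_finite)
  then show ?thesis
    using \<open>i \<noteq> l\<close> by (simp add: split f_def)
qed

lemma expectation_abs_le_sqrt_second_moment: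
  fixes X :: "'a \<Rightarrow> real"
  assumes "finite (set_pmf p)"
  shows "measure_pmf.expectation p (\<lambda>x. \<bar>X x\<bar>) \<le> sqrt (measure_pmf.expectation p (\<lambda>x. (X x)\<^sup>2))"
proof -
  have "0 \<le> measure_pmf.variance p (\<lambda>x. \<bar>X x\<bar>)"
    by (rule measure_pmf.variance_positive)
  also have "\<dots> = measure_pmf.expectation p (\<lambda>x. (X x)\<^sup>2) - (measure_pmf.expectation p (\<lambda>x. \<bar>X x\<bar>))\<^sup>2"
    by (simp add: measure_pmf.variance_eq integrable_measure_pmf_finite[OF assms])
  finally show ?thesis
    by (simp add: real_le_rsqrt)
qed

lemma expectation_centered_square_le_mean:
  fixes g :: "'b::finite \<Rightarrow> real"
  assumes "\<And>y. 0 \<le> g y" "\<And>y. g y \<le> 1"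
  shows "measure_pmf.expectation p (\<lambda>y. (g y - measure_pmf.expectation p g)\<^sup>2)
           \<le> measure_pmf.expectation p g"
proof -
  define m where "m = measure_pmf.expectation p g"
  have int: "integrable p f" for f :: "'b \<Rightarrow> real"
    by (simp add: integrable_measure_pmf_finite)
  have "(g y - m)\<^sup>2 \<le> g y - 2 * m * g y + m\<^sup>2" for y
  proof -
    have "g y * g y \<le> g y"
      using assms[of y] by (simp add: mult_right_le_one_le)
    moreover have "(g y - m)\<^sup>2 = g y * g y - 2 * m * g y + m\<^sup>2"
      by (simp add: power2_eq_square algebra_simps)
    ultimately show ?thesis
      by linarith
  qed
  then have "measure_pmf.expectation p (\<lambda>y. (g y - m)\<^sup>2)
      \<le> measure_pmf.expectation p (\<lambda>y. g y - 2 * m * g y + m\<^sup>2)"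
    by (intro integral_mono int)
  also have "\<dots> = m - m\<^sup>2"
    by (simp add: int m_def power2_eq_square)
  also have "\<dots> \<le> m"
    by simp
  finally show ?thesis
    by (simp add: m_def)
qed

lemma expectation_Pi_pmf_centered_mult:
  fixes p :: "'i \<Rightarrow> 'b::finite pmf" and g h :: "'b \<Rightarrow> real"
  assumes fin: "finite I" and "i \<in> I" "l \<in> I" "i \<noteq> l" and "\<And>y. 0 \<le> g y" "\<And>y. 0 \<le> h y"
  shows "measure_pmf.expectation (Pi_pmf I d p)
           (\<lambda>\<omega>. (g (\<omega> i) - measure_pmf.expectation (p i) g) * (h (\<omega> l) - measure_pmf.expectation (p l) h))
         = 0"
proof -
  have int: "integrable (Pi_pmf I d p) f" for f :: "_ \<Rightarrow> real"
    by (intro integrable_measure_pmf_finite finite_set_pmf_Pi_pmf fin)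
  show ?thesis
    using assms expectation_Pi_pmf_component[OF fin \<open>i \<in> I\<close>, of d p g]
      expectation_Pi_pmf_component[OF fin \<open>l \<in> I\<close>, of d p h]
    by (simp add: algebra_simps int expectation_Pi_pmf_mult_components)
qed

lemma second_moment_sum_centered_Pi_pmf:
  fixes p :: "'i \<Rightarrow> 'b::finite pmf" and g :: "'i \<Rightarrow> 'b \<Rightarrow> real"
  assumes fin: "finite I" and "J \<subseteq> I" and g: "\<And>i y. 0 \<le> g i y"
  defines "m i \<equiv> measure_pmf.expectation (p i) (g i)"
  shows "measure_pmf.expectation (Pi_pmf I d p) (\<lambda>\<omega>. (\<Sum>i\<in>J. g i (\<omega> i) - m i)\<^sup>2)
           = (\<Sum>i\<in>J. measure_pmf.expectation (p i) (\<lambda>y. (g i y - m i)\<^sup>2))"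
proof -
  let ?E = "measure_pmf.expectation (Pi_pmf I d p)"
  have int: "integrable (Pi_pmf I d p) f" for f :: "_ \<Rightarrow> real"
    by (intro integrable_measure_pmf_finite finite_set_pmf_Pi_pmf fin)
  have "?E (\<lambda>\<omega>. (\<Sum>i\<in>J. g i (\<omega> i) - m i)\<^sup>2)
      = (\<Sum>i\<in>J. \<Sum>l\<in>J. ?E (\<lambda>\<omega>. (g i (\<omega> i) - m i) * (g l (\<omega> l) - m l)))"
    by (simp add: power2_eq_square sum_product int)
  also have "\<dots> = (\<Sum>i\<in>J. ?E (\<lambda>\<omega>. (g i (\<omega> i) - m i)\<^sup>2))"
    using finite_subset[OF \<open>J \<subseteq> I\<close> fin] \<open>J \<subseteq> I\<close>
    by (intro sum.cong refl, subst sum.remove)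
      (auto intro!: sum.neutral expectation_Pi_pmf_centered_mult[OF fin] g simp: m_def power2_eq_square)
  also have "\<dots> = (\<Sum>i\<in>J. measure_pmf.expectation (p i) (\<lambda>y. (g i y - m i)\<^sup>2))"
    using \<open>J \<subseteq> I\<close> by (intro sum.cong refl expectation_Pi_pmf_component[OF fin]) auto
  finally show ?thesis .
qed

lemma expectation_abs_sum_centered_Pi_pmf_le:
  fixes p :: "'i \<Rightarrow> 'b::finite pmf" and g :: "'i \<Rightarrow> 'b \<Rightarrow> real"
  assumes fin: "finite I" and "J \<subseteq> I" and "\<And>i y. 0 \<le> g i y" "\<And>i y. g i y \<le> 1"
  shows "measure_pmf.expectation (Pi_pmf I d p)
           (\<lambda>\<omega>. \<bar>\<Sum>i\<in>J. g i (\<omega> i) - measure_pmf.expectation (p i) (g i)\<bar>)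
         \<le> sqrt (\<Sum>i\<in>J. measure_pmf.expectation (p i) (g i))"
proof -
  let ?m = "\<lambda>i. measure_pmf.expectation (p i) (g i)"
  have "measure_pmf.expectation (Pi_pmf I d p) (\<lambda>\<omega>. \<bar>\<Sum>i\<in>J. g i (\<omega> i) - ?m i\<bar>)
      \<le> sqrt (measure_pmf.expectation (Pi_pmf I d p) (\<lambda>\<omega>. (\<Sum>i\<in>J. g i (\<omega> i) - ?m i)\<^sup>2))"
    by (intro expectation_abs_le_sqrt_second_moment finite_set_pmf_Pi_pmf fin)
  also have "\<dots> = sqrt (\<Sum>i\<in>J. measure_pmf.expectation (p i) (\<lambda>y. (g i y - ?m i)\<^sup>2))"
    using assms by (simp add: second_moment_sum_centered_Pi_pmf)
  also have "\<dots> \<le> sqrt (\<Sum>i\<in>J. ?m i)"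
    using assms by (intro real_sqrt_le_mono sum_mono expectation_centered_square_le_mean)
  finally show ?thesis .
qed

lemma sum_sqrt_le_sqrt_card_mult_sum:
  fixes f :: "'a \<Rightarrow> real"
  assumes "\<And>a. a \<in> A \<Longrightarrow> 0 \<le> f a"
  shows "(\<Sum>a\<in>A. sqrt (f a)) \<le> sqrt (real (card A) * (\<Sum>a\<in>A. f a))"
proof -
  have "(\<Sum>a\<in>A. 1 * sqrt (f a))\<^sup>2 \<le> (\<Sum>a\<in>A. 1\<^sup>2) * (\<Sum>a\<in>A. (sqrt (f a))\<^sup>2)"
    by (rule Cauchy_Schwarz_ineq_sum)
  also have "\<dots> = real (card A) * (\<Sum>a\<in>A. f a)"
    using assms by simp
  finally show ?thesis
    by (simp add: real_le_rsqrt)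
qed

section \<open>Concentration of empirical distributions\<close>

(* The mean of emp N omega when each omega (k, j) has law p (k, j). *)
definition avg_law :: "('k::finite \<Rightarrow> nat) \<Rightarrow> ('k \<times> nat \<Rightarrow> 'a pmf) \<Rightarrow> ('a \<times> 'k \<Rightarrow> real)" where
  "avg_law N p = (\<lambda>(a, k). (\<Sum>j\<in>{1..N k}. pmf (p (k, j)) a) / real (Npop N))"

definition lln_rate :: "('k::finite \<Rightarrow> nat) \<Rightarrow> real" where
  "lln_rate N = 1 / real (Npop N) * (\<Sum>k\<in>UNIV. sqrt (real (N k)))"

lemma sum_UNIV_pair:
  "(\<Sum>z\<in>UNIV. h z) = (\<Sum>k\<in>UNIV. \<Sum>a\<in>UNIV. h (a, k))"
  for h :: "'a::finite \<times> 'k::finite \<Rightarrow> 'b::comm_monoid_add"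
proof -
  have "(\<Sum>z\<in>UNIV. h z) = (\<Sum>a\<in>UNIV. \<Sum>k\<in>UNIV. h (a, k))"
    by (simp add: sum.cartesian_product)
  also have "\<dots> = (\<Sum>k\<in>UNIV. \<Sum>a\<in>UNIV. h (a, k))"
    by (rule sum.swap)
  finally show ?thesis .
qed

lemma l1_pair: "l1 f g = (\<Sum>k\<in>UNIV. \<Sum>a\<in>UNIV. \<bar>f (a, k) - g (a, k)\<bar>)"
  unfolding l1_def by (rule sum_UNIV_pair)

lemma l1_self [simp]: "l1 f f = 0"
  by (simp add: l1_def)

lemma l1_triangle: "l1 f h \<le> l1 f g + l1 g h"
  unfolding l1_def sum.distrib[symmetric] by (intro sum_mono) arith

lemma sum_real_N_eq_Npop: "(\<Sum>k\<in>UNIV. real (N k)) = real (Npop N)"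
  by (simp add: Npop_def)

lemma sum_agents_const: "(\<Sum>k\<in>UNIV. \<Sum>j\<in>{1..N k}. c) = real (Npop N) * c"
  by (simp add: Npop_def sum_distrib_right)

lemma finite_agents: "finite (agents N)"
  by (simp add: agents_def)

lemma Npop_pos: "(\<And>k. 1 \<le> N k) \<Longrightarrow> 0 < Npop N"
  unfolding Npop_def by (metis UNIV_I finite_class.finite_UNIV less_le_trans
      member_le_sum zero_le zero_less_one)

lemma emp_eq_avg_law: "emp N c = avg_law N (\<lambda>i. return_pmf (c i))"
  unfolding emp_def avg_law_def pmf_return by (simp only: indicator_def singleton_iff of_bool_def)

lemma avg_law_simplex:
  assumes "0 < Npop N"
  shows "avg_law N p \<in> dist_simplex"
proof -
  have "(\<Sum>z\<in>UNIV. avg_law N p z) = (\<Sum>k\<in>UNIV. \<Sum>j\<in>{1..N k}. \<Sum>a\<in>UNIV. pmf (p (k, j)) a) / real (Npop N)"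
    unfolding sum_UNIV_pair avg_law_def by (subst sum.swap) (simp add: sum_divide_distrib)
  also have "\<dots> = 1"
    using assms by (simp add: sum_pmf_eq_1 sum_real_N_eq_Npop)
  finally show ?thesis
    by (auto simp: dist_simplex_def avg_law_def intro!: sum_nonneg divide_nonneg_nonneg)
qed

lemma emp_simplex: "0 < Npop N \<Longrightarrow> emp N c \<in> dist_simplex"
  by (simp add: emp_eq_avg_law avg_law_simplex)

lemma l1_avg_law:
  "l1 (avg_law N p) (avg_law N q) =
     (\<Sum>k\<in>UNIV. \<Sum>a\<in>UNIV. \<bar>\<Sum>j\<in>{1..N k}. pmf (p (k, j)) a - pmf (q (k, j)) a\<bar> / real (Npop N))"
  unfolding l1_pair avg_law_def by (simp add: sum_subtractf flip: diff_divide_distrib)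

lemma l1_avg_law_le:
  "l1 (avg_law N p) (avg_law N q) \<le>
     (\<Sum>k\<in>UNIV. \<Sum>j\<in>{1..N k}. l1_pmf (p (k, j)) (q (k, j))) / real (Npop N)"
proof -
  have "l1 (avg_law N p) (avg_law N q) \<le>
      (\<Sum>k\<in>UNIV. \<Sum>a\<in>UNIV. \<Sum>j\<in>{1..N k}. \<bar>pmf (p (k, j)) a - pmf (q (k, j)) a\<bar> / real (Npop N))"
    unfolding l1_avg_law sum_divide_distrib[symmetric]
    by (intro sum_mono divide_right_mono sum_abs) simp
  also have "\<dots> = (\<Sum>k\<in>UNIV. \<Sum>j\<in>{1..N k}. l1_pmf (p (k, j)) (q (k, j))) / real (Npop N)"
    unfolding l1_pmf_def sum_divide_distrib[symmetric] by (subst sum.swap) simp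
  finally show ?thesis .
qed

(* avg_law N (%i. K i (omega i)) is the conditional mean, given omega, of the empirical
   distribution of samples drawn from the kernel K; it concentrates around the unconditional
   mean. *)
lemma expectation_l1_avg_law_le:
  fixes q :: "'k::finite \<times> nat \<Rightarrow> 'b::finite pmf" and K :: "'k \<times> nat \<Rightarrow> 'b \<Rightarrow> 'a::finite pmf"
  shows "measure_pmf.expectation (Pi_pmf (agents N) d q)
           (\<lambda>\<omega>. l1 (avg_law N (\<lambda>i. K i (\<omega> i))) (avg_law N (\<lambda>i. bind_pmf (q i) (K i))))
         \<le> sqrt (real CARD('a)) * lln_rate N"
proof -
  let ?E = "measure_pmf.expectation (Pi_pmf (agents N) d q)"
  let ?m = "\<lambda>k j a. pmf (bind_pmf (q (k, j)) (K (k, j))) a"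
  have per_value: "?E (\<lambda>\<omega>. \<bar>\<Sum>j\<in>{1..N k}. pmf (K (k, j) (\<omega> (k, j))) a - ?m k j a\<bar>)
      \<le> sqrt (\<Sum>j\<in>{1..N k}. ?m k j a)" for k a
  proof -
    have "?E (\<lambda>\<omega>. \<bar>\<Sum>i\<in>Pair k ` {1..N k}. pmf (K i (\<omega> i)) a
          - measure_pmf.expectation (q i) (\<lambda>y. pmf (K i y) a)\<bar>)
        \<le> sqrt (\<Sum>i\<in>Pair k ` {1..N k}. measure_pmf.expectation (q i) (\<lambda>y. pmf (K i y) a))"
      by (rule expectation_abs_sum_centered_Pi_pmf_le[OF finite_agents]) (auto simp: agents_def pmf_le_1)
    then show ?thesis
      by (simp add: sum.reindex inj_on_def pmf_bind)
  qed
  have per_class: "(\<Sum>a\<in>UNIV. sqrt (\<Sum>j\<in>{1..N k}. ?m k j a)) \<le> sqrt (real CARD('a)) * sqrt (real (N k))"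
    for k
  proof -
    have "(\<Sum>a\<in>UNIV. sqrt (\<Sum>j\<in>{1..N k}. ?m k j a))
        \<le> sqrt (real CARD('a) * (\<Sum>a\<in>UNIV. \<Sum>j\<in>{1..N k}. ?m k j a))"
      by (rule sum_sqrt_le_sqrt_card_mult_sum) (simp add: sum_nonneg)
    also have "(\<Sum>a\<in>UNIV. \<Sum>j\<in>{1..N k}. ?m k j a) = real (N k)"
      by (subst sum.swap) (simp add: sum_pmf_eq_1)
    finally show ?thesis
      by (simp add: real_sqrt_mult)
  qed
  have "?E (\<lambda>\<omega>. l1 (avg_law N (\<lambda>i. K i (\<omega> i))) (avg_law N (\<lambda>i. bind_pmf (q i) (K i))))
      = (\<Sum>k\<in>UNIV. \<Sum>a\<in>UNIV. ?E (\<lambda>\<omega>. \<bar>\<Sum>j\<in>{1..N k}. pmf (K (k, j) (\<omega> (k, j))) a - ?m k j a\<bar>)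
          / real (Npop N))"
    unfolding l1_avg_law
    by (simp add: integrable_measure_pmf_finite finite_set_pmf_Pi_pmf[OF finite_agents])
  also have "\<dots> \<le> (\<Sum>k\<in>UNIV. \<Sum>a\<in>UNIV. sqrt (\<Sum>j\<in>{1..N k}. ?m k j a) / real (Npop N))"
    by (intro sum_mono divide_right_mono per_value) simp
  also have "\<dots> \<le> (\<Sum>k\<in>UNIV. sqrt (real CARD('a)) * sqrt (real (N k)) / real (Npop N))"
    unfolding sum_divide_distrib[symmetric] by (intro sum_mono divide_right_mono per_class) simp
  also have "\<dots> = sqrt (real CARD('a)) * lln_rate N"
    by (simp add: lln_rate_def sum_divide_distrib[symmetric] sum_distrib_left)
  finally show ?thesis .
qed

lemma expectation_l1_emp_le:
  fixes q :: "'k::finite \<times> nat \<Rightarrow> 'a::finite pmf"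
  shows "measure_pmf.expectation (Pi_pmf (agents N) d q) (\<lambda>\<omega>. l1 (emp N \<omega>) (avg_law N q))
         \<le> sqrt (real CARD('a)) * lln_rate N"
  using expectation_l1_avg_law_le[of N d q "\<lambda>_. return_pmf"]
  by (simp add: emp_eq_avg_law bind_return_pmf')

section \<open>The mean-field operators\<close>

lemma simplex_nonneg: "\<mu> \<in> dist_simplex \<Longrightarrow> 0 \<le> \<mu> z"
  by (simp add: dist_simplex_def)

lemma simplex_sum_pair: "\<mu> \<in> dist_simplex \<Longrightarrow> (\<Sum>k\<in>UNIV. \<Sum>x\<in>UNIV. \<mu> (x, k)) = 1"
  by (simp add: dist_simplex_def flip: sum_UNIV_pair)

lemma simplex_pairI:
  assumes "\<And>z. 0 \<le> \<mu> z" "(\<Sum>k\<in>UNIV. \<Sum>x\<in>UNIV. \<mu> (x, k)) = 1"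
  shows "\<mu> \<in> dist_simplex"
  using assms by (simp add: dist_simplex_def sum_UNIV_pair)

lemma nu_MF_simplex:
  assumes "\<mu> \<in> dist_simplex"
  shows "nu_MF \<mu> pt \<in> dist_simplex"
proof (rule simplex_pairI)
  show "0 \<le> nu_MF \<mu> pt z" for z
    using simplex_nonneg[OF assms] by (cases z) (simp add: nu_MF_def sum_nonneg)
  have "(\<Sum>k\<in>UNIV. \<Sum>u\<in>UNIV. nu_MF \<mu> pt (u, k))
      = (\<Sum>k\<in>UNIV. \<Sum>x\<in>UNIV. \<Sum>u\<in>UNIV. pmf (pt k x \<mu>) u * \<mu> (x, k))"
    unfolding nu_MF_def by (simp only: prod.case) (intro sum.cong refl sum.swap)
  also have "\<dots> = 1"
    by (simp add: sum_pmf_eq_1 simplex_sum_pair[OF assms] flip: sum_distrib_right)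
  finally show "(\<Sum>k\<in>UNIV. \<Sum>u\<in>UNIV. nu_MF \<mu> pt (u, k)) = 1" .
qed

lemma sum_rotate3:
  "(\<Sum>y\<in>C. \<Sum>x\<in>A. \<Sum>u\<in>B. f x u y) = (\<Sum>x\<in>A. \<Sum>u\<in>B. \<Sum>y\<in>C. f x u y)"
  by (subst sum.swap) (intro sum.cong refl sum.swap)

lemma P_MF_simplex:
  assumes "\<mu> \<in> dist_simplex"
  shows "P_MF P \<mu> pt \<in> dist_simplex"
proof (rule simplex_pairI)
  show "0 \<le> P_MF P \<mu> pt z" for z
    using simplex_nonneg[OF assms] by (cases z) (simp add: P_MF_def sum_nonneg)
  have "(\<Sum>k\<in>UNIV. \<Sum>y\<in>UNIV. P_MF P \<mu> pt (y, k))
      = (\<Sum>k\<in>UNIV. \<Sum>x\<in>UNIV. \<Sum>u\<in>UNIV. \<Sum>y\<in>UNIV.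
           \<mu> (x, k) * pmf (pt k x \<mu>) u * pmf (P k x u \<mu> (nu_MF \<mu> pt)) y)"
    unfolding P_MF_def prod.case by (rule sum.cong[OF refl], rule sum_rotate3)
  also have "\<dots> = 1"
    by (simp add: sum_pmf_eq_1 simplex_sum_pair[OF assms] flip: sum_distrib_left)
  finally show "(\<Sum>k\<in>UNIV. \<Sum>y\<in>UNIV. P_MF P \<mu> pt (y, k)) = 1" .
qed

lemma mf_seq_simplex: "\<mu>0 \<in> dist_simplex \<Longrightarrow> mf_seq P \<mu>0 \<pi> t \<in> dist_simplex"
  by (induction t) (simp_all add: P_MF_simplex)

lemma sum_mult_emp:
  fixes c :: "'k::finite \<times> nat \<Rightarrow> 'a::finite"
  shows "(\<Sum>x\<in>UNIV. F x * emp N c (x, k)) = (\<Sum>j\<in>{1..N k}. F (c (k, j))) / real (Npop N)"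
proof -
  have "(\<Sum>x\<in>UNIV. F x * emp N c (x, k))
      = (\<Sum>x\<in>UNIV. \<Sum>j\<in>{1..N k}. if c (k, j) = x then F x else 0) / real (Npop N)"
    by (auto simp: emp_def sum_divide_distrib[symmetric] sum_distrib_left intro!: sum.cong)
  also have "\<dots> = (\<Sum>j\<in>{1..N k}. \<Sum>x\<in>UNIV. if c (k, j) = x then F x else 0) / real (Npop N)"
    by (subst sum.swap) (rule refl)
  also have "\<dots> = (\<Sum>j\<in>{1..N k}. F (c (k, j))) / real (Npop N)"
    by simp
  finally show ?thesis .
qed

lemma nu_MF_emp:
  "nu_MF (emp N xs) pt = avg_law N (\<lambda>(k, j). pt k (xs (k, j)) (emp N xs))"
  by (auto simp: nu_MF_def avg_law_def sum_mult_emp)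

lemma P_MF_emp:
  "P_MF P (emp N xs) pt = avg_law N (\<lambda>(k, j). bind_pmf (pt k (xs (k, j)) (emp N xs))
     (\<lambda>u. P k (xs (k, j)) u (emp N xs) (nu_MF (emp N xs) pt)))"
proof (intro ext, clarify)
  fix y k
  have "P_MF P (emp N xs) pt (y, k) = (\<Sum>x\<in>UNIV. (\<Sum>u\<in>UNIV. pmf (pt k x (emp N xs)) u *
      pmf (P k x u (emp N xs) (nu_MF (emp N xs) pt)) y) * emp N xs (x, k))"
    by (simp add: P_MF_def sum_distrib_left sum_distrib_right mult_ac)
  then show "P_MF P (emp N xs) pt (y, k) = avg_law N (\<lambda>(k, j). bind_pmf (pt k (xs (k, j)) (emp N xs))
      (\<lambda>u. P k (xs (k, j)) u (emp N xs) (nu_MF (emp N xs) pt))) (y, k)"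
    by (simp add: sum_mult_emp avg_law_def pmf_bind_finite_type)
qed

lemma r_MF_emp:
  "r_MF r k (emp N xs) pt = (\<Sum>j\<in>{1..N k}. measure_pmf.expectation (pt k (xs (k, j)) (emp N xs))
     (\<lambda>u. r k (xs (k, j)) u (emp N xs) (nu_MF (emp N xs) pt))) / real (Npop N)"
proof -
  have "r_MF r k (emp N xs) pt = (\<Sum>x\<in>UNIV. (\<Sum>u\<in>UNIV. pmf (pt k x (emp N xs)) u *
      r k x u (emp N xs) (nu_MF (emp N xs) pt)) * emp N xs (x, k))"
    by (simp add: r_MF_def sum_distrib_left sum_distrib_right mult_ac)
  then show ?thesis
    by (simp add: sum_mult_emp expectation_finite_type)
qed

lemma sum_abs_mix_le:
  fixes f g :: "'y::finite \<Rightarrow> real"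
  assumes "0 \<le> b" "0 \<le> p" "0 \<le> q"
    and "(\<Sum>y\<in>UNIV. \<bar>f y\<bar>) \<le> M" "(\<Sum>y\<in>UNIV. \<bar>f y - g y\<bar>) \<le> E"
  shows "(\<Sum>y\<in>UNIV. \<bar>a * p * f y - b * q * g y\<bar>)
           \<le> \<bar>a - b\<bar> * p * M + b * \<bar>p - q\<bar> * M + b * q * E"
proof -
  have pointwise: "\<bar>a * p * f y - b * q * g y\<bar>
      \<le> \<bar>a - b\<bar> * p * \<bar>f y\<bar> + b * \<bar>p - q\<bar> * \<bar>f y\<bar> + b * q * \<bar>f y - g y\<bar>" for y
  proof -
    have "a * p * f y - b * q * g y = (a - b) * p * f y + b * (p - q) * f y + b * q * (f y - g y)"
      by (simp add: algebra_simps)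
    also have "\<bar>\<dots>\<bar> \<le> \<bar>(a - b) * p * f y\<bar> + \<bar>b * (p - q) * f y\<bar> + \<bar>b * q * (f y - g y)\<bar>"
      by (rule order_trans[OF abs_triangle_ineq add_right_mono[OF abs_triangle_ineq]])
    also have "\<dots> = \<bar>a - b\<bar> * p * \<bar>f y\<bar> + b * \<bar>p - q\<bar> * \<bar>f y\<bar> + b * q * \<bar>f y - g y\<bar>"
      using assms(1-3) by (simp add: abs_mult)
    finally show ?thesis .
  qed
  have "(\<Sum>y\<in>UNIV. \<bar>a * p * f y - b * q * g y\<bar>)
      \<le> \<bar>a - b\<bar> * p * (\<Sum>y\<in>UNIV. \<bar>f y\<bar>) + b * \<bar>p - q\<bar> * (\<Sum>y\<in>UNIV. \<bar>f y\<bar>)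
        + b * q * (\<Sum>y\<in>UNIV. \<bar>f y - g y\<bar>)"
    unfolding sum_distrib_left sum.distrib[symmetric] by (intro sum_mono pointwise)
  also have "\<dots> \<le> \<bar>a - b\<bar> * p * M + b * \<bar>p - q\<bar> * M + b * q * E"
    using assms by (intro add_mono mult_left_mono) auto
  finally show ?thesis .
qed

lemma sum_abs_mix_pmf_le:
  fixes p q :: "'u::finite pmf" and F G :: "'u \<Rightarrow> 'y::finite \<Rightarrow> real"
  assumes "0 \<le> b" and "\<And>u. (\<Sum>y\<in>UNIV. \<bar>F u y\<bar>) \<le> M" and "\<And>u. (\<Sum>y\<in>UNIV. \<bar>F u y - G u y\<bar>) \<le> E"
  shows "(\<Sum>u\<in>UNIV. \<Sum>y\<in>UNIV. \<bar>a * pmf p u * F u y - b * pmf q u * G u y\<bar>)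
           \<le> \<bar>a - b\<bar> * M + b * M * l1_pmf p q + b * E"
proof -
  have "(\<Sum>u\<in>UNIV. \<Sum>y\<in>UNIV. \<bar>a * pmf p u * F u y - b * pmf q u * G u y\<bar>)
      \<le> (\<Sum>u\<in>UNIV. \<bar>a - b\<bar> * pmf p u * M + b * \<bar>pmf p u - pmf q u\<bar> * M + b * pmf q u * E)"
    using assms by (intro sum_mono sum_abs_mix_le pmf_nonneg)
  also have "\<dots> = (\<Sum>u\<in>UNIV. (\<bar>a - b\<bar> * M) * pmf p u + (b * M) * \<bar>pmf p u - pmf q u\<bar> + (b * E) * pmf q u)"
    by (intro sum.cong refl) (simp add: mult_ac)
  also have "\<dots> = \<bar>a - b\<bar> * M + b * M * l1_pmf p q + b * E"
    by (simp only: sum.distrib l1_pmf_def sum_pmf_UNIV flip: sum_distrib_left)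
  finally show ?thesis .
qed

(* nu_MF, P_MF and r_MF all have this shape, with F the indicator of the action, the
   transition law and the reward respectively. *)
lemma l1_mixture_le:
  fixes \<mu>1 \<mu>2 :: "'x::finite \<times> 'k::finite \<Rightarrow> real" and p1 p2 :: "'k \<Rightarrow> 'x \<Rightarrow> 'u::finite pmf"
    and F1 F2 :: "'k \<Rightarrow> 'x \<Rightarrow> 'u \<Rightarrow> 'y::finite \<Rightarrow> real"
  assumes \<mu>1: "\<mu>1 \<in> dist_simplex" and \<mu>2: "\<mu>2 \<in> dist_simplex"
    and p_lip: "\<And>k x. l1_pmf (p1 k x) (p2 k x) \<le> LQ * l1 \<mu>1 \<mu>2"
    and F_bound: "\<And>k x u. (\<Sum>y\<in>UNIV. \<bar>F1 k x u y\<bar>) \<le> M"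
    and F_diff: "\<And>k x u. (\<Sum>y\<in>UNIV. \<bar>F1 k x u y - F2 k x u y\<bar>) \<le> E"
  shows "(\<Sum>k\<in>UNIV. \<Sum>y\<in>UNIV. \<bar>\<Sum>x\<in>UNIV. \<Sum>u\<in>UNIV.
            \<mu>1 (x, k) * pmf (p1 k x) u * F1 k x u y - \<mu>2 (x, k) * pmf (p2 k x) u * F2 k x u y\<bar>)
         \<le> M * (1 + LQ) * l1 \<mu>1 \<mu>2 + E"
proof -
  let ?T = "\<lambda>k x u y. \<mu>1 (x, k) * pmf (p1 k x) u * F1 k x u y - \<mu>2 (x, k) * pmf (p2 k x) u * F2 k x u y"
  define d where "d = l1 \<mu>1 \<mu>2"
  have M: "0 \<le> M"
    using F_bound[of undefined undefined undefined] by (meson order_trans sum_nonneg abs_ge_zero)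
  have per_state: "(\<Sum>u\<in>UNIV. \<Sum>y\<in>UNIV. \<bar>?T k x u y\<bar>)
      \<le> \<bar>\<mu>1 (x, k) - \<mu>2 (x, k)\<bar> * M + \<mu>2 (x, k) * (M * LQ * d) + \<mu>2 (x, k) * E" for k x
  proof -
    have "\<mu>2 (x, k) * M * l1_pmf (p1 k x) (p2 k x) \<le> \<mu>2 (x, k) * (M * LQ * d)"
      using p_lip[of k x] M simplex_nonneg[OF \<mu>2, of "(x, k)"] by (simp add: d_def mult.assoc mult_left_mono)
    then show ?thesis
      using sum_abs_mix_pmf_le[where a = "\<mu>1 (x, k)" and p = "p1 k x" and q = "p2 k x"
          and F = "F1 k x" and G = "F2 k x", OF simplex_nonneg[OF \<mu>2, of "(x, k)"] F_bound F_diff]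
      by linarith
  qed
  have "(\<Sum>k\<in>UNIV. \<Sum>y\<in>UNIV. \<bar>\<Sum>x\<in>UNIV. \<Sum>u\<in>UNIV. ?T k x u y\<bar>)
      \<le> (\<Sum>k\<in>UNIV. \<Sum>y\<in>UNIV. \<Sum>x\<in>UNIV. \<Sum>u\<in>UNIV. \<bar>?T k x u y\<bar>)"
    by (intro sum_mono order_trans[OF sum_abs] sum_abs)
  also have "\<dots> = (\<Sum>k\<in>UNIV. \<Sum>x\<in>UNIV. \<Sum>u\<in>UNIV. \<Sum>y\<in>UNIV. \<bar>?T k x u y\<bar>)"
    by (rule sum.cong[OF refl], rule sum_rotate3)
  also have "\<dots> \<le> (\<Sum>k\<in>UNIV. \<Sum>x\<in>UNIV.
      \<bar>\<mu>1 (x, k) - \<mu>2 (x, k)\<bar> * M + \<mu>2 (x, k) * (M * LQ * d) + \<mu>2 (x, k) * E)"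
    by (intro sum_mono per_state)
  also have "\<dots> = (\<Sum>k\<in>UNIV. \<Sum>x\<in>UNIV. \<bar>\<mu>1 (x, k) - \<mu>2 (x, k)\<bar>) * M
      + (M * LQ * d + E) * (\<Sum>k\<in>UNIV. \<Sum>x\<in>UNIV. \<mu>2 (x, k))"
    by (simp add: sum.distrib sum_distrib_left sum_distrib_right algebra_simps)
  also have "\<dots> = M * (1 + LQ) * l1 \<mu>1 \<mu>2 + E"
    by (simp add: simplex_sum_pair[OF \<mu>2] d_def l1_pair algebra_simps)
  finally show ?thesis .
qed

lemma nu_MF_lipschitz:
  fixes pt :: "'k::finite \<Rightarrow> 'x::finite \<Rightarrow> ('x, 'k) dmeas \<Rightarrow> 'u::finite pmf"
  assumes \<mu>1: "\<mu>1 \<in> dist_simplex" and \<mu>2: "\<mu>2 \<in> dist_simplex"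
    and pt_lip: "\<And>k x. l1_pmf (pt k x \<mu>1) (pt k x \<mu>2) \<le> LQ * l1 \<mu>1 \<mu>2"
  shows "l1 (nu_MF \<mu>1 pt) (nu_MF \<mu>2 pt) \<le> (1 + LQ) * l1 \<mu>1 \<mu>2"
proof -
  let ?\<delta> = "\<lambda>(k::'k) (x::'x) (u::'u) y. if u = y then 1 else (0::real)"
  have \<delta>: "(\<Sum>u\<in>UNIV. a * pmf p u * ?\<delta> k x u y) = a * pmf p y"
    for a and k :: 'k and x :: 'x and p :: "'u pmf" and y :: 'u
    by (simp add: if_distrib[of "\<lambda>z. _ * z"] cong: if_cong)
  have "l1 (nu_MF \<mu>1 pt) (nu_MF \<mu>2 pt) = (\<Sum>k\<in>UNIV. \<Sum>y\<in>UNIV. \<bar>\<Sum>x\<in>UNIV. \<Sum>u\<in>UNIV.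
      \<mu>1 (x, k) * pmf (pt k x \<mu>1) u * ?\<delta> k x u y - \<mu>2 (x, k) * pmf (pt k x \<mu>2) u * ?\<delta> k x u y\<bar>)"
    by (simp only: l1_pair nu_MF_def prod.case sum_subtractf \<delta>) (simp add: mult.commute)
  also have "\<dots> \<le> 1 * (1 + LQ) * l1 \<mu>1 \<mu>2 + 0"
    by (rule l1_mixture_le[OF \<mu>1 \<mu>2 pt_lip]) auto
  finally show ?thesis
    by simp
qed

locale mf_model =
  fixes P :: "('x::finite, 'u::finite, 'k::finite) trans"
    and r :: "('x, 'u, 'k) rew"
    and MR LR LP LQ :: real
    and \<pi> :: "('x, 'u, 'k) policy"
  assumes MR_nonneg: "0 \<le> MR" and LR_nonneg: "0 \<le> LR"
    and LP_nonneg: "0 \<le> LP" and LQ_nonneg: "0 \<le> LQ"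
    and r_bound: "\<And>k x u \<mu> \<nu>. \<mu> \<in> dist_simplex \<Longrightarrow> \<nu> \<in> dist_simplex \<Longrightarrow> \<bar>r k x u \<mu> \<nu>\<bar> \<le> MR"
    and r_lipschitz: "\<And>k x u \<mu>1 \<mu>2 \<nu>1 \<nu>2. \<mu>1 \<in> dist_simplex \<Longrightarrow> \<mu>2 \<in> dist_simplex \<Longrightarrow>
      \<nu>1 \<in> dist_simplex \<Longrightarrow> \<nu>2 \<in> dist_simplex \<Longrightarrow>
      \<bar>r k x u \<mu>1 \<nu>1 - r k x u \<mu>2 \<nu>2\<bar> \<le> LR * (l1 \<mu>1 \<mu>2 + l1 \<nu>1 \<nu>2)"
    and P_lipschitz: "\<And>k x u \<mu>1 \<mu>2 \<nu>1 \<nu>2. \<mu>1 \<in> dist_simplex \<Longrightarrow> \<mu>2 \<in> dist_simplex \<Longrightarrow>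
      \<nu>1 \<in> dist_simplex \<Longrightarrow> \<nu>2 \<in> dist_simplex \<Longrightarrow>
      l1_pmf (P k x u \<mu>1 \<nu>1) (P k x u \<mu>2 \<nu>2) \<le> LP * (l1 \<mu>1 \<mu>2 + l1 \<nu>1 \<nu>2)"
    and \<pi>_lipschitz: "\<And>t k x \<mu>1 \<mu>2. \<mu>1 \<in> dist_simplex \<Longrightarrow> \<mu>2 \<in> dist_simplex \<Longrightarrow>
      l1_pmf (\<pi> t k x \<mu>1) (\<pi> t k x \<mu>2) \<le> LQ * l1 \<mu>1 \<mu>2"
begin

abbreviation S_R :: real where "S_R \<equiv> MR * (1 + LQ) + LR * (2 + LQ)"

abbreviation S_P :: real where "S_P \<equiv> (1 + LQ) + LP * (2 + LQ)"

lemma nu_MF_policy_lipschitz: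
  assumes "\<mu>1 \<in> dist_simplex" "\<mu>2 \<in> dist_simplex"
  shows "l1 (nu_MF \<mu>1 (\<pi> t)) (nu_MF \<mu>2 (\<pi> t)) \<le> (1 + LQ) * l1 \<mu>1 \<mu>2"
  using assms by (intro nu_MF_lipschitz \<pi>_lipschitz)

lemma r_MF_sum_lipschitz:
  assumes \<mu>1: "\<mu>1 \<in> dist_simplex" and \<mu>2: "\<mu>2 \<in> dist_simplex"
  shows "\<bar>(\<Sum>k\<in>UNIV. r_MF r k \<mu>1 (\<pi> t)) - (\<Sum>k\<in>UNIV. r_MF r k \<mu>2 (\<pi> t))\<bar> \<le> S_R * l1 \<mu>1 \<mu>2"
proof -
  let ?\<nu>1 = "nu_MF \<mu>1 (\<pi> t)" and ?\<nu>2 = "nu_MF \<mu>2 (\<pi> t)"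
  have \<nu>: "?\<nu>1 \<in> dist_simplex" "?\<nu>2 \<in> dist_simplex"
    using \<mu>1 \<mu>2 by (simp_all add: nu_MF_simplex)
  have "\<bar>(\<Sum>k\<in>UNIV. r_MF r k \<mu>1 (\<pi> t)) - (\<Sum>k\<in>UNIV. r_MF r k \<mu>2 (\<pi> t))\<bar>
      \<le> (\<Sum>k\<in>UNIV. \<Sum>y\<in>(UNIV :: unit set). \<bar>\<Sum>x\<in>UNIV. \<Sum>u\<in>UNIV.
           \<mu>1 (x, k) * pmf (\<pi> t k x \<mu>1) u * r k x u \<mu>1 ?\<nu>1
         - \<mu>2 (x, k) * pmf (\<pi> t k x \<mu>2) u * r k x u \<mu>2 ?\<nu>2\<bar>)"
    unfolding r_MF_def by (simp add: sum_abs sum_subtractf[symmetric] UNIV_unit)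
  also have "\<dots> \<le> MR * (1 + LQ) * l1 \<mu>1 \<mu>2 + LR * (l1 \<mu>1 \<mu>2 + l1 ?\<nu>1 ?\<nu>2)"
    by (rule l1_mixture_le[OF \<mu>1 \<mu>2 \<pi>_lipschitz[OF \<mu>1 \<mu>2]])
      (simp_all add: UNIV_unit r_bound r_lipschitz \<mu>1 \<mu>2 \<nu>)
  also have "\<dots> \<le> S_R * l1 \<mu>1 \<mu>2"
    using mult_left_mono[OF nu_MF_policy_lipschitz[OF \<mu>1 \<mu>2] LR_nonneg]
    by (simp add: algebra_simps)
  finally show ?thesis .
qed

lemma P_MF_lipschitz:
  assumes \<mu>1: "\<mu>1 \<in> dist_simplex" and \<mu>2: "\<mu>2 \<in> dist_simplex"
  shows "l1 (P_MF P \<mu>1 (\<pi> t)) (P_MF P \<mu>2 (\<pi> t)) \<le> S_P * l1 \<mu>1 \<mu>2"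
proof -
  let ?\<nu>1 = "nu_MF \<mu>1 (\<pi> t)" and ?\<nu>2 = "nu_MF \<mu>2 (\<pi> t)"
  have \<nu>: "?\<nu>1 \<in> dist_simplex" "?\<nu>2 \<in> dist_simplex"
    using \<mu>1 \<mu>2 by (simp_all add: nu_MF_simplex)
  have "l1 (P_MF P \<mu>1 (\<pi> t)) (P_MF P \<mu>2 (\<pi> t))
      = (\<Sum>k\<in>UNIV. \<Sum>y\<in>UNIV. \<bar>\<Sum>x\<in>UNIV. \<Sum>u\<in>UNIV.
           \<mu>1 (x, k) * pmf (\<pi> t k x \<mu>1) u * pmf (P k x u \<mu>1 ?\<nu>1) y
         - \<mu>2 (x, k) * pmf (\<pi> t k x \<mu>2) u * pmf (P k x u \<mu>2 ?\<nu>2) y\<bar>)"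
    by (simp add: l1_pair P_MF_def sum_subtractf)
  also have "\<dots> \<le> 1 * (1 + LQ) * l1 \<mu>1 \<mu>2 + LP * (l1 \<mu>1 \<mu>2 + l1 ?\<nu>1 ?\<nu>2)"
    by (rule l1_mixture_le[OF \<mu>1 \<mu>2 \<pi>_lipschitz[OF \<mu>1 \<mu>2]])
      (simp_all add: sum_pmf_UNIV P_lipschitz \<mu>1 \<mu>2 \<nu> flip: l1_pmf_def)
  also have "\<dots> \<le> S_P * l1 \<mu>1 \<mu>2"
    using mult_left_mono[OF nu_MF_policy_lipschitz[OF \<mu>1 \<mu>2] LP_nonneg]
    by (simp add: algebra_simps)
  finally show ?thesis .
qed

lemma abs_r_MF_le:
  assumes \<mu>: "\<mu> \<in> dist_simplex"
  shows "\<bar>r_MF r k \<mu> (\<pi> t)\<bar> \<le> MR"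
proof -
  have \<nu>: "nu_MF \<mu> (\<pi> t) \<in> dist_simplex"
    using \<mu> by (rule nu_MF_simplex)
  have "\<bar>r_MF r k \<mu> (\<pi> t)\<bar> \<le> (\<Sum>x\<in>UNIV. \<Sum>u\<in>UNIV. \<mu> (x, k) * pmf (\<pi> t k x \<mu>) u * MR)"
    unfolding r_MF_def using simplex_nonneg[OF \<mu>] r_bound[OF \<mu> \<nu>]
    by (intro order_trans[OF sum_abs] sum_mono order_trans[OF sum_abs])
      (simp add: abs_mult mult_left_mono)
  also have "\<dots> = (\<Sum>x\<in>UNIV. \<mu> (x, k) * MR * (\<Sum>u\<in>UNIV. pmf (\<pi> t k x \<mu>) u))"
    by (simp add: sum_distrib_left mult_ac)
  also have "\<dots> = MR * (\<Sum>x\<in>UNIV. \<mu> (x, k))"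
    by (simp add: sum_pmf_UNIV sum_distrib_left mult_ac)
  also have "\<dots> \<le> MR * (\<Sum>k'\<in>UNIV. \<Sum>x\<in>UNIV. \<mu> (x, k'))"
    using simplex_nonneg[OF \<mu>]
    by (intro mult_left_mono MR_nonneg member_le_sum[where f = "\<lambda>k'. \<Sum>x\<in>UNIV. \<mu> (x, k')"])
      (auto intro: sum_nonneg)
  finally show ?thesis
    by (simp add: simplex_sum_pair[OF \<mu>])
qed

end

section \<open>The N-agent system\<close>

lemma finite_set_pmf_act_pmf:
  fixes \<pi> :: "('x, 'u::finite, 'k::finite) policy"
  shows "finite (set_pmf (act_pmf N \<pi> t xs))"
  unfolding act_pmf_def by (intro finite_set_pmf_Pi_pmf finite_agents)

lemma finite_set_pmf_next_pmf:
  fixes P :: "('x::finite, 'u, 'k::finite) trans"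
  shows "finite (set_pmf (next_pmf N P xs us))"
  unfolding next_pmf_def by (intro finite_set_pmf_Pi_pmf finite_agents)

lemma expectation_act_pmf_agent:
  fixes F :: "'u::finite \<Rightarrow> real"
  assumes "j \<in> {1..N k}"
  shows "measure_pmf.expectation (act_pmf N \<pi> t xs) (\<lambda>us. F (us (k, j)))
         = measure_pmf.expectation (\<pi> t k (xs (k, j)) (emp N xs)) F"
  using assms unfolding act_pmf_def
  by (subst expectation_Pi_pmf_component[OF finite_agents]) (auto simp: agents_def)

lemma expectation_l1_emp_act_pmf_le:
  fixes \<pi> :: "('x::finite, 'u::finite, 'k::finite) policy"
  shows "measure_pmf.expectation (act_pmf N \<pi> t xs) (\<lambda>us. l1 (emp N us) (nu_MF (emp N xs) (\<pi> t)))
         \<le> sqrt (real CARD('u)) * lln_rate N"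
  unfolding act_pmf_def nu_MF_emp by (rule expectation_l1_emp_le)

lemma abs_agent_average_le:
  assumes "0 < Npop N" and "\<And>k j. j \<in> {1..N k} \<Longrightarrow> \<bar>X k j\<bar> \<le> B"
  shows "\<bar>1 / real (Npop N) * (\<Sum>k\<in>UNIV. \<Sum>j\<in>{1..N k}. X k j)\<bar> \<le> B"
proof -
  have "\<bar>\<Sum>k\<in>UNIV. \<Sum>j\<in>{1..N k}. X k j\<bar> \<le> (\<Sum>k\<in>UNIV. \<Sum>j\<in>{1..N k}. B)"
    using assms(2) by (intro order_trans[OF sum_abs] sum_mono order_trans[OF sum_abs]) auto
  also have "\<dots> = real (Npop N) * B"
    by (rule sum_agents_const)
  finally show ?thesis
    using assms(1) by (simp add: abs_mult field_simps)
qed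

primrec state_dist :: "('k::finite \<Rightarrow> nat) \<Rightarrow> ('x, 'u, 'k) trans \<Rightarrow> ('x, 'u, 'k) policy
    \<Rightarrow> ('k \<times> nat \<Rightarrow> 'x) \<Rightarrow> nat \<Rightarrow> ('k \<times> nat \<Rightarrow> 'x) pmf" where
  "state_dist N P \<pi> x0 0 = return_pmf x0"
| "state_dist N P \<pi> x0 (Suc t) =
     bind_pmf (state_dist N P \<pi> x0 t) (\<lambda>xs. bind_pmf (act_pmf N \<pi> t xs) (next_pmf N P xs))"

lemma joint_dist_eq_bind_state_dist:
  "joint_dist N P \<pi> x0 t =
     bind_pmf (state_dist N P \<pi> x0 t) (\<lambda>xs. map_pmf (\<lambda>us. (xs, us)) (act_pmf N \<pi> t xs))"
  by (induction t) (simp_all add: bind_return_pmf bind_assoc_pmf bind_map_pmf)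

lemma finite_set_pmf_state_dist:
  fixes P :: "('x::finite, 'u::finite, 'k::finite) trans"
  shows "finite (set_pmf (state_dist N P \<pi> x0 t))"
  by (induction t) (simp_all add: finite_set_pmf_act_pmf finite_set_pmf_next_pmf)

lemma finite_set_pmf_joint_dist:
  fixes P :: "('x::finite, 'u::finite, 'k::finite) trans"
  shows "finite (set_pmf (joint_dist N P \<pi> x0 t))"
  by (simp add: joint_dist_eq_bind_state_dist finite_set_pmf_state_dist finite_set_pmf_act_pmf)

definition mf_error :: "('k::finite \<Rightarrow> nat) \<Rightarrow> ('x::finite, 'u::finite, 'k) trans \<Rightarrow> ('x, 'u, 'k) policy
    \<Rightarrow> ('k \<times> nat \<Rightarrow> 'x) \<Rightarrow> nat \<Rightarrow> real" where
  "mf_error N P \<pi> x0 t = measure_pmf.expectation (state_dist N P \<pi> x0 t)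
     (\<lambda>xs. l1 (emp N xs) (mf_seq P (emp N x0) \<pi> t))"

definition reward_N :: "('k::finite \<Rightarrow> nat) \<Rightarrow> ('x::finite, 'u::finite, 'k) trans \<Rightarrow> ('x, 'u, 'k) rew
    \<Rightarrow> ('x, 'u, 'k) policy \<Rightarrow> ('k \<times> nat \<Rightarrow> 'x) \<Rightarrow> nat \<Rightarrow> real" where
  "reward_N N P r \<pi> x0 t = 1 / real (Npop N) * (\<Sum>k\<in>UNIV. \<Sum>j\<in>{1..N k}.
     measure_pmf.expectation (joint_dist N P \<pi> x0 t)
       (\<lambda>(xs, us). r k (xs (k, j)) (us (k, j)) (emp N xs) (emp N us)))"

definition reward_MF :: "('x::finite, 'u::finite, 'k::finite) trans \<Rightarrow> ('x, 'u, 'k) rew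
    \<Rightarrow> ('x, 'k) dmeas \<Rightarrow> ('x, 'u, 'k) policy \<Rightarrow> nat \<Rightarrow> real" where
  "reward_MF P r \<mu>0 \<pi> t = (\<Sum>k\<in>UNIV. r_MF r k (mf_seq P \<mu>0 \<pi> t) (\<pi> t))"

section \<open>Discounted sums\<close>

lemma summable_discounted_bounded:
  fixes f :: "nat \<Rightarrow> real"
  assumes "0 \<le> \<gamma>" "\<gamma> < 1" "\<And>t. \<bar>f t\<bar> \<le> C"
  shows "summable (\<lambda>t. \<gamma> ^ t * f t)"
proof (rule summable_comparison_test[OF _ summable_mult[OF summable_geometric, of \<gamma> C]])
  have "norm (\<gamma> ^ t * f t) \<le> C * \<gamma> ^ t" for t
    using assms(1) mult_right_mono[OF assms(3)[of t], of "\<gamma> ^ t"] by (simp add: abs_mult mult.commute)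
  then show "\<exists>N. \<forall>t\<ge>N. norm (\<gamma> ^ t * f t) \<le> C * \<gamma> ^ t"
    by blast
qed (use assms in simp)

lemma discounted_suminf_diff_le:
  fixes f g :: "nat \<Rightarrow> real"
  assumes \<gamma>: "0 \<le> \<gamma>" "\<gamma> < 1" and s: "1 < s" "\<gamma> * s < 1"
    and f: "\<And>t. \<bar>f t\<bar> \<le> C" and g: "\<And>t. \<bar>g t\<bar> \<le> D"
    and gap: "\<And>t. \<bar>f t - g t\<bar> \<le> a + b * (\<Sum>i<t. s ^ i)"
  shows "\<bar>(\<Sum>t. \<gamma> ^ t * f t) - (\<Sum>t. \<gamma> ^ t * g t)\<bar>
           \<le> a / (1 - \<gamma>) + b / (s - 1) * (1 / (1 - \<gamma> * s) - 1 / (1 - \<gamma>))"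
proof -
  define B where "B t = a * \<gamma> ^ t + b / (s - 1) * (\<gamma> * s) ^ t - b / (s - 1) * \<gamma> ^ t" for t
  have "B sums (a * (1 / (1 - \<gamma>)) + b / (s - 1) * (1 / (1 - \<gamma> * s)) - b / (s - 1) * (1 / (1 - \<gamma>)))"
    unfolding B_def using \<gamma> s
    by (intro sums_diff sums_add sums_mult geometric_sums) (auto simp: mult_nonneg_nonneg)
  then have B_sums: "B sums (a / (1 - \<gamma>) + b / (s - 1) * (1 / (1 - \<gamma> * s) - 1 / (1 - \<gamma>)))"
    by (simp add: algebra_simps)
  have B_bound: "\<bar>\<gamma> ^ t * (f t - g t)\<bar> \<le> B t" for t
  proof -
    have "(\<Sum>i<t. s ^ i) = (s ^ t - 1) / (s - 1)"
      using s by (simp add: sum_gp_strict field_simps)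
    then have "\<bar>\<gamma> ^ t * (f t - g t)\<bar> \<le> \<gamma> ^ t * (a + b * ((s ^ t - 1) / (s - 1)))"
      using gap[of t] \<gamma> by (simp add: abs_mult mult_left_mono)
    also have "\<dots> = B t"
      by (simp add: B_def power_mult_distrib algebra_simps diff_divide_distrib)
    finally show ?thesis .
  qed
  have summable_diff: "summable (\<lambda>t. \<bar>\<gamma> ^ t * (f t - g t)\<bar>)"
    by (rule summable_comparison_test[OF _ sums_summable[OF B_sums]]) (use B_bound in auto)
  have "(\<Sum>t. \<gamma> ^ t * f t) - (\<Sum>t. \<gamma> ^ t * g t) = (\<Sum>t. \<gamma> ^ t * (f t - g t))"
    using suminf_diff[OF summable_discounted_bounded[OF \<gamma> f] summable_discounted_bounded[OF \<gamma> g]]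
    by (simp add: right_diff_distrib)
  also have "\<bar>\<dots>\<bar> \<le> (\<Sum>t. \<bar>\<gamma> ^ t * (f t - g t)\<bar>)"
    by (rule summable_rabs[OF summable_diff])
  also have "\<dots> \<le> (\<Sum>t. B t)"
    by (rule suminf_le[OF B_bound summable_diff sums_summable[OF B_sums]])
  also have "\<dots> = a / (1 - \<gamma>) + b / (s - 1) * (1 / (1 - \<gamma> * s) - 1 / (1 - \<gamma>))"
    using B_sums by (rule sums_unique[symmetric])
  finally show ?thesis .
qed

section \<open>Propagation of the mean-field error\<close>

locale mf_system = mf_model P r MR LR LP LQ \<pi>
  for P :: "('x::finite, 'u::finite, 'k::finite) trans" and r MR LR LP LQ \<pi> +
  fixes N :: "'k \<Rightarrow> nat"
  assumes N_pos: "\<And>k. 1 \<le> N k"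
begin

lemma Npop_gt_0: "0 < Npop N"
  using N_pos by (rule Npop_pos)

lemma emp_in_simplex [simp]: "emp N c \<in> dist_simplex"
  by (rule emp_simplex[OF Npop_gt_0])

lemma expected_reward_step:
  "\<bar>1 / real (Npop N) * (\<Sum>k\<in>UNIV. \<Sum>j\<in>{1..N k}. measure_pmf.expectation (act_pmf N \<pi> t xs)
        (\<lambda>us. r k (xs (k, j)) (us (k, j)) (emp N xs) (emp N us)))
     - (\<Sum>k\<in>UNIV. r_MF r k (emp N xs) (\<pi> t))\<bar>
   \<le> LR * (sqrt (real CARD('u)) * lln_rate N)"
proof -
  let ?\<mu> = "emp N xs"
  let ?\<nu> = "nu_MF ?\<mu> (\<pi> t)"
  let ?E = "measure_pmf.expectation (act_pmf N \<pi> t xs)"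
  have \<nu>: "?\<nu> \<in> dist_simplex"
    by (simp add: nu_MF_simplex)
  have int: "integrable (act_pmf N \<pi> t xs) f" for f :: "_ \<Rightarrow> real"
    by (rule integrable_measure_pmf_finite[OF finite_set_pmf_act_pmf])
  have marginal: "?E (\<lambda>us. r k (xs (k, j)) (us (k, j)) ?\<mu> ?\<nu>)
      = measure_pmf.expectation (\<pi> t k (xs (k, j)) ?\<mu>) (\<lambda>u. r k (xs (k, j)) u ?\<mu> ?\<nu>)"
    if "j \<in> {1..N k}" for k j
    by (rule expectation_act_pmf_agent[where N = N and k = k and j = j
          and F = "\<lambda>u. r k (xs (k, j)) u ?\<mu> ?\<nu>", OF that])
  have "(\<Sum>k\<in>UNIV. r_MF r k ?\<mu> (\<pi> t))
      = (\<Sum>k\<in>UNIV. \<Sum>j\<in>{1..N k}. ?E (\<lambda>us. r k (xs (k, j)) (us (k, j)) ?\<mu> ?\<nu>)) / real (Npop N)"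
    unfolding r_MF_emp sum_divide_distrib[symmetric]
    by (intro arg_cong[where f = "\<lambda>s. s / real (Npop N)"] sum.cong refl marginal[symmetric])
  then have "1 / real (Npop N) * (\<Sum>k\<in>UNIV. \<Sum>j\<in>{1..N k}. ?E (\<lambda>us. r k (xs (k, j)) (us (k, j)) ?\<mu> (emp N us)))
      - (\<Sum>k\<in>UNIV. r_MF r k ?\<mu> (\<pi> t))
      = 1 / real (Npop N) * (\<Sum>k\<in>UNIV. \<Sum>j\<in>{1..N k}.
          ?E (\<lambda>us. r k (xs (k, j)) (us (k, j)) ?\<mu> (emp N us) - r k (xs (k, j)) (us (k, j)) ?\<mu> ?\<nu>))"
    by (simp add: int sum_subtractf right_diff_distrib)
  also have "\<bar>\<dots>\<bar> \<le> LR * ?E (\<lambda>us. l1 (emp N us) ?\<nu>)"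
  proof (rule abs_agent_average_le[OF Npop_gt_0])
    fix k j
    have "\<bar>?E (\<lambda>us. r k (xs (k, j)) (us (k, j)) ?\<mu> (emp N us) - r k (xs (k, j)) (us (k, j)) ?\<mu> ?\<nu>)\<bar>
        \<le> ?E (\<lambda>us. \<bar>r k (xs (k, j)) (us (k, j)) ?\<mu> (emp N us) - r k (xs (k, j)) (us (k, j)) ?\<mu> ?\<nu>\<bar>)"
      by (rule integral_abs_bound)
    also have "\<dots> \<le> ?E (\<lambda>us. LR * l1 (emp N us) ?\<nu>)"
      using r_lipschitz[of ?\<mu> ?\<mu> _ ?\<nu>] \<nu> by (intro integral_mono int) simp
    finally show "\<bar>?E (\<lambda>us. r k (xs (k, j)) (us (k, j)) ?\<mu> (emp N us) - r k (xs (k, j)) (us (k, j)) ?\<mu> ?\<nu>)\<bar>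
        \<le> LR * ?E (\<lambda>us. l1 (emp N us) ?\<nu>)"
      by simp
  qed
  also have "\<dots> \<le> LR * (sqrt (real CARD('u)) * lln_rate N)"
    by (intro mult_left_mono expectation_l1_emp_act_pmf_le LR_nonneg)
  finally show ?thesis .
qed

lemma expected_next_l1_le:
  "measure_pmf.expectation (next_pmf N P xs us) (\<lambda>xs'. l1 (emp N xs') (P_MF P (emp N xs) (\<pi> t)))
   \<le> sqrt (real CARD('x)) * lln_rate N + LP * l1 (emp N us) (nu_MF (emp N xs) (\<pi> t))
     + l1 (avg_law N (\<lambda>(k, j). P k (xs (k, j)) (us (k, j)) (emp N xs) (nu_MF (emp N xs) (\<pi> t))))
          (P_MF P (emp N xs) (\<pi> t))"
proof -
  let ?\<mu> = "emp N xs"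
  let ?\<nu> = "nu_MF ?\<mu> (\<pi> t)"
  define Q where "Q = (\<lambda>(k, j). P k (xs (k, j)) (us (k, j)) ?\<mu> (emp N us))"
  define R where "R = (\<lambda>(k, j). P k (xs (k, j)) (us (k, j)) ?\<mu> ?\<nu>)"
  \<comment> \<open>The three error sources: sampling the next states, the empirical action distribution
    in place of its mean \<open>?\<nu>\<close> inside \<open>P\<close>, and (still random through \<open>us\<close>) sampling the actions.\<close>
  let ?drift = "l1 (avg_law N R) (P_MF P ?\<mu> (\<pi> t))"
  have int: "integrable (next_pmf N P xs us) f" for f :: "_ \<Rightarrow> real"
    by (rule integrable_measure_pmf_finite[OF finite_set_pmf_next_pmf])
  have action_noise: "l1 (avg_law N Q) (avg_law N R) \<le> LP * l1 (emp N us) ?\<nu>"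
  proof -
    have "l1 (avg_law N Q) (avg_law N R) \<le> (\<Sum>k\<in>UNIV. \<Sum>j\<in>{1..N k}. LP * l1 (emp N us) ?\<nu>) / real (Npop N)"
      using P_lipschitz[of ?\<mu> ?\<mu> "emp N us" ?\<nu>]
      by (intro order_trans[OF l1_avg_law_le] divide_right_mono sum_mono)
        (simp_all add: Q_def R_def nu_MF_simplex)
    also have "\<dots> = LP * l1 (emp N us) ?\<nu>"
      unfolding sum_agents_const using Npop_gt_0 by simp
    finally show ?thesis .
  qed
  have "measure_pmf.expectation (next_pmf N P xs us) (\<lambda>xs'. l1 (emp N xs') (P_MF P ?\<mu> (\<pi> t)))
      \<le> measure_pmf.expectation (next_pmf N P xs us)
           (\<lambda>xs'. l1 (emp N xs') (avg_law N Q) + (l1 (avg_law N Q) (avg_law N R) + ?drift))"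
    by (intro integral_mono int order_trans[OF l1_triangle add_left_mono[OF l1_triangle]])
  also have "\<dots> = measure_pmf.expectation (next_pmf N P xs us) (\<lambda>xs'. l1 (emp N xs') (avg_law N Q))
      + (l1 (avg_law N Q) (avg_law N R) + ?drift)"
    by (simp add: int)
  also have "\<dots> \<le> sqrt (real CARD('x)) * lln_rate N + (LP * l1 (emp N us) ?\<nu> + ?drift)"
    unfolding next_pmf_def Q_def by (intro add_mono expectation_l1_emp_le action_noise[unfolded Q_def] order_refl)
  finally show ?thesis
    by (simp add: R_def)
qed

lemma expected_transition_step:
  "measure_pmf.expectation (act_pmf N \<pi> t xs) (\<lambda>us. measure_pmf.expectation (next_pmf N P xs us)
      (\<lambda>xs'. l1 (emp N xs') (P_MF P (emp N xs) (\<pi> t))))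
   \<le> (2 * sqrt (real CARD('x)) + LP * sqrt (real CARD('u))) * lln_rate N"
proof -
  let ?\<mu> = "emp N xs"
  let ?\<nu> = "nu_MF ?\<mu> (\<pi> t)"
  define q where "q = (\<lambda>(k, j). \<pi> t k (xs (k, j)) ?\<mu>)"
  define G where "G = (\<lambda>(k, j) u. P k (xs (k, j)) u ?\<mu> ?\<nu>)"
  let ?drift = "\<lambda>us. l1 (avg_law N (\<lambda>i. G i (us i))) (avg_law N (\<lambda>i. bind_pmf (q i) (G i)))"
  have act: "act_pmf N \<pi> t xs = Pi_pmf (agents N) undefined q"
    by (simp add: act_pmf_def q_def)
  have int: "integrable (act_pmf N \<pi> t xs) f" for f :: "_ \<Rightarrow> real"
    by (rule integrable_measure_pmf_finite[OF finite_set_pmf_act_pmf])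
  have action_concentration:
    "measure_pmf.expectation (act_pmf N \<pi> t xs) (\<lambda>us. l1 (emp N us) ?\<nu>) \<le> sqrt (real CARD('u)) * lln_rate N"
    by (rule expectation_l1_emp_act_pmf_le)
  have mean_field: "P_MF P ?\<mu> (\<pi> t) = avg_law N (\<lambda>i. bind_pmf (q i) (G i))"
    by (simp add: P_MF_emp q_def G_def split_def)
  have drift: "avg_law N (\<lambda>(k, j). P k (xs (k, j)) (us (k, j)) ?\<mu> ?\<nu>) = avg_law N (\<lambda>i. G i (us i))" for us
    by (simp add: G_def split_def)
  have "measure_pmf.expectation (act_pmf N \<pi> t xs) (\<lambda>us. measure_pmf.expectation (next_pmf N P xs us)
      (\<lambda>xs'. l1 (emp N xs') (P_MF P ?\<mu> (\<pi> t))))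
      \<le> measure_pmf.expectation (act_pmf N \<pi> t xs)
           (\<lambda>us. sqrt (real CARD('x)) * lln_rate N + LP * l1 (emp N us) ?\<nu> + ?drift us)"
    using expected_next_l1_le[of xs _ t] unfolding drift mean_field by (intro integral_mono int)
  also have "\<dots> = sqrt (real CARD('x)) * lln_rate N
      + LP * measure_pmf.expectation (act_pmf N \<pi> t xs) (\<lambda>us. l1 (emp N us) ?\<nu>)
      + measure_pmf.expectation (act_pmf N \<pi> t xs) ?drift"
    by (simp add: int)
  also have "\<dots> \<le> sqrt (real CARD('x)) * lln_rate N + LP * (sqrt (real CARD('u)) * lln_rate N)
      + sqrt (real CARD('x)) * lln_rate N"
    unfolding act
    by (intro add_mono order_refl mult_left_mono LP_nonneg expectation_l1_avg_law_le
        action_concentration[unfolded act])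
  finally show ?thesis
    by (simp add: algebra_simps)
qed

lemma integrable_state_dist: "integrable (state_dist N P \<pi> x0 t) f"
  for f :: "_ \<Rightarrow> real"
  by (rule integrable_measure_pmf_finite[OF finite_set_pmf_state_dist])

lemma expected_next_error_le:
  assumes \<rho>: "\<rho> \<in> dist_simplex"
  shows "measure_pmf.expectation (act_pmf N \<pi> t xs) (\<lambda>us. measure_pmf.expectation (next_pmf N P xs us)
      (\<lambda>xs'. l1 (emp N xs') (P_MF P \<rho> (\<pi> t))))
    \<le> (2 * sqrt (real CARD('x)) + LP * sqrt (real CARD('u))) * lln_rate N + S_P * l1 (emp N xs) \<rho>"
proof -
  let ?d = "l1 (P_MF P (emp N xs) (\<pi> t)) (P_MF P \<rho> (\<pi> t))"
  have int_act: "integrable (act_pmf N \<pi> t xs) f" for f :: "_ \<Rightarrow> real"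
    by (rule integrable_measure_pmf_finite[OF finite_set_pmf_act_pmf])
  have int_next: "integrable (next_pmf N P xs us) f" for us and f :: "_ \<Rightarrow> real"
    by (rule integrable_measure_pmf_finite[OF finite_set_pmf_next_pmf])
  have "measure_pmf.expectation (act_pmf N \<pi> t xs) (\<lambda>us. measure_pmf.expectation (next_pmf N P xs us)
      (\<lambda>xs'. l1 (emp N xs') (P_MF P \<rho> (\<pi> t))))
    \<le> measure_pmf.expectation (act_pmf N \<pi> t xs) (\<lambda>us. measure_pmf.expectation (next_pmf N P xs us)
      (\<lambda>xs'. l1 (emp N xs') (P_MF P (emp N xs) (\<pi> t)) + ?d))"
    by (intro integral_mono int_act int_next l1_triangle)
  also have "\<dots> = measure_pmf.expectation (act_pmf N \<pi> t xs) (\<lambda>us. measure_pmf.expectation (next_pmf N P xs us)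
      (\<lambda>xs'. l1 (emp N xs') (P_MF P (emp N xs) (\<pi> t)))) + ?d"
    by (simp add: int_act int_next)
  also have "\<dots> \<le> (2 * sqrt (real CARD('x)) + LP * sqrt (real CARD('u))) * lln_rate N + S_P * l1 (emp N xs) \<rho>"
    by (intro add_mono expected_transition_step P_MF_lipschitz emp_in_simplex \<rho>)
  finally show ?thesis .
qed

lemma mf_error_Suc_le:
  "mf_error N P \<pi> x0 (Suc t)
     \<le> S_P * mf_error N P \<pi> x0 t + (2 * sqrt (real CARD('x)) + LP * sqrt (real CARD('u))) * lln_rate N"
proof -
  let ?\<mu> = "mf_seq P (emp N x0) \<pi> t"
  have "mf_error N P \<pi> x0 (Suc t) = measure_pmf.expectation (state_dist N P \<pi> x0 t)
      (\<lambda>xs. measure_pmf.expectation (act_pmf N \<pi> t xs) (\<lambda>us. measure_pmf.expectation (next_pmf N P xs us)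
        (\<lambda>xs'. l1 (emp N xs') (P_MF P ?\<mu> (\<pi> t)))))"
    by (simp add: mf_error_def expectation_bind_pmf_finite finite_set_pmf_state_dist
        finite_set_pmf_act_pmf finite_set_pmf_next_pmf)
  also have "\<dots> \<le> measure_pmf.expectation (state_dist N P \<pi> x0 t)
      (\<lambda>xs. (2 * sqrt (real CARD('x)) + LP * sqrt (real CARD('u))) * lln_rate N + S_P * l1 (emp N xs) ?\<mu>)"
    by (intro integral_mono integrable_state_dist expected_next_error_le mf_seq_simplex emp_in_simplex)
  also have "\<dots> = S_P * mf_error N P \<pi> x0 t + (2 * sqrt (real CARD('x)) + LP * sqrt (real CARD('u))) * lln_rate N"
    by (simp add: mf_error_def integrable_state_dist)
  finally show ?thesis .
qed

lemma S_P_nonneg: "0 \<le> S_P"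
  using LP_nonneg LQ_nonneg by simp

lemma mf_error_le:
  "mf_error N P \<pi> x0 t
     \<le> (2 * sqrt (real CARD('x)) + LP * sqrt (real CARD('u))) * lln_rate N * (\<Sum>i<t. S_P ^ i)"
proof (induction t)
  case 0
  then show ?case
    by (simp add: mf_error_def)
next
  case (Suc t)
  let ?c = "(2 * sqrt (real CARD('x)) + LP * sqrt (real CARD('u))) * lln_rate N"
  have "mf_error N P \<pi> x0 (Suc t) \<le> S_P * (?c * (\<Sum>i<t. S_P ^ i)) + ?c"
    using mf_error_Suc_le[of x0 t] mult_left_mono[OF Suc.IH S_P_nonneg] by linarith
  also have "\<dots> = ?c * (\<Sum>i<Suc t. S_P ^ i)"
  proof -
    have "s * (c * (\<Sum>i<t. s ^ i)) + c = c * (\<Sum>i<Suc t. s ^ i)" for s c :: real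
      by (simp add: sum.lessThan_Suc_shift sum_distrib_left algebra_simps del: sum.lessThan_Suc)
    then show ?thesis .
  qed
  finally show ?case .
qed

lemma reward_gap_le:
  "\<bar>reward_N N P r \<pi> x0 t - reward_MF P r (emp N x0) \<pi> t\<bar>
     \<le> LR * (sqrt (real CARD('u)) * lln_rate N) + S_R * mf_error N P \<pi> x0 t"
proof -
  let ?\<mu> = "mf_seq P (emp N x0) \<pi> t"
  define h where "h xs = 1 / real (Npop N) * (\<Sum>k\<in>UNIV. \<Sum>j\<in>{1..N k}. measure_pmf.expectation
    (act_pmf N \<pi> t xs) (\<lambda>us. r k (xs (k, j)) (us (k, j)) (emp N xs) (emp N us)))" for xs
  have \<mu>: "?\<mu> \<in> dist_simplex"
    by (simp add: mf_seq_simplex)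
  have "reward_N N P r \<pi> x0 t = measure_pmf.expectation (state_dist N P \<pi> x0 t) (\<lambda>xs. h xs)"
    by (simp add: reward_N_def h_def joint_dist_eq_bind_state_dist expectation_bind_pmf_finite
        finite_set_pmf_state_dist finite_set_pmf_act_pmf integrable_state_dist
        Bochner_Integration.integral_sum)
  then have "\<bar>reward_N N P r \<pi> x0 t - reward_MF P r (emp N x0) \<pi> t\<bar>
      = \<bar>measure_pmf.expectation (state_dist N P \<pi> x0 t) (\<lambda>xs. h xs - reward_MF P r (emp N x0) \<pi> t)\<bar>"
    by (simp add: integrable_state_dist)
  also have "\<dots> \<le> measure_pmf.expectation (state_dist N P \<pi> x0 t)
      (\<lambda>xs. \<bar>h xs - reward_MF P r (emp N x0) \<pi> t\<bar>)"
    by (rule integral_abs_bound)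
  also have "\<dots> \<le> measure_pmf.expectation (state_dist N P \<pi> x0 t)
      (\<lambda>xs. LR * (sqrt (real CARD('u)) * lln_rate N) + S_R * l1 (emp N xs) ?\<mu>)"
  proof (intro integral_mono integrable_state_dist)
    fix xs
    show "\<bar>h xs - reward_MF P r (emp N x0) \<pi> t\<bar> \<le> LR * (sqrt (real CARD('u)) * lln_rate N) + S_R * l1 (emp N xs) ?\<mu>"
      using expected_reward_step[of t xs] r_MF_sum_lipschitz[OF emp_in_simplex[of xs] \<mu>, of t]
      unfolding h_def reward_MF_def by linarith
  qed
  also have "\<dots> = LR * (sqrt (real CARD('u)) * lln_rate N) + S_R * mf_error N P \<pi> x0 t"
    by (simp add: mf_error_def integrable_state_dist)
  finally show ?thesis .
qed

lemma abs_expected_agent_reward_le: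
  "\<bar>measure_pmf.expectation (joint_dist N P \<pi> x0 t)
      (\<lambda>(xs, us). r k (xs (k, j)) (us (k, j)) (emp N xs) (emp N us))\<bar> \<le> MR"
  by (rule order_trans[OF integral_abs_bound],
      intro measure_pmf.integral_le_const integrable_measure_pmf_finite finite_set_pmf_joint_dist)
    (auto intro!: AE_I2 r_bound)

lemma abs_reward_N_le: "\<bar>reward_N N P r \<pi> x0 t\<bar> \<le> MR"
  unfolding reward_N_def by (intro abs_agent_average_le Npop_gt_0 abs_expected_agent_reward_le)

lemma abs_reward_MF_le: "\<bar>reward_MF P r (emp N x0) \<pi> t\<bar> \<le> real CARD('k) * MR"
proof -
  have "\<bar>reward_MF P r (emp N x0) \<pi> t\<bar> \<le> (\<Sum>k\<in>(UNIV :: 'k set). MR)"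
    unfolding reward_MF_def by (intro order_trans[OF sum_abs] sum_mono abs_r_MF_le mf_seq_simplex emp_in_simplex)
  then show ?thesis
    by simp
qed

lemma vN_eq_suminf:
  assumes "0 \<le> \<gamma>" "\<gamma> < 1"
  shows "vN N P r \<gamma> x0 \<pi> = (\<Sum>t. \<gamma> ^ t * reward_N N P r \<pi> x0 t)"
proof -
  define X where "X k j t = measure_pmf.expectation (joint_dist N P \<pi> x0 t)
    (\<lambda>(xs, us). r k (xs (k, j)) (us (k, j)) (emp N xs) (emp N us))" for k j t
  have summable: "summable (\<lambda>t. \<gamma> ^ t * X k j t)" for k j
    unfolding X_def by (rule summable_discounted_bounded[OF assms abs_expected_agent_reward_le])
  have "vN N P r \<gamma> x0 \<pi> = 1 / real (Npop N) * (\<Sum>k\<in>UNIV. \<Sum>j\<in>{1..N k}. \<Sum>t. \<gamma> ^ t * X k j t)"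
    by (simp add: vN_def X_def)
  also have "\<dots> = 1 / real (Npop N) * (\<Sum>t. \<Sum>k\<in>UNIV. \<Sum>j\<in>{1..N k}. \<gamma> ^ t * X k j t)"
    by (simp add: suminf_sum summable summable_sum)
  also have "\<dots> = (\<Sum>t. 1 / real (Npop N) * (\<Sum>k\<in>UNIV. \<Sum>j\<in>{1..N k}. \<gamma> ^ t * X k j t))"
    by (intro suminf_mult[symmetric] summable_sum summable)
  also have "\<dots> = (\<Sum>t. \<gamma> ^ t * reward_N N P r \<pi> x0 t)"
    by (simp add: reward_N_def X_def sum_distrib_left mult.left_commute)
  finally show ?thesis .
qed

lemma vMF_eq_suminf:
  assumes "0 \<le> \<gamma>" "\<gamma> < 1"
  shows "vMF P r \<gamma> (emp N x0) \<pi> = (\<Sum>t. \<gamma> ^ t * reward_MF P r (emp N x0) \<pi> t)"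
proof -
  have summable: "summable (\<lambda>t. \<gamma> ^ t * r_MF r k (mf_seq P (emp N x0) \<pi> t) (\<pi> t))" for k
    by (rule summable_discounted_bounded[OF assms abs_r_MF_le[OF mf_seq_simplex[OF emp_in_simplex]]])
  show ?thesis
    by (simp add: vMF_def reward_MF_def suminf_sum summable sum_distrib_left)
qed

lemma S_R_nonneg: "0 \<le> S_R"
  using MR_nonneg LR_nonneg LQ_nonneg by simp

lemma value_gap_le:
  assumes \<gamma>: "0 \<le> \<gamma>" and contraction: "\<gamma> * S_P < 1" and expansion: "1 < S_P"
  shows "\<bar>vN N P r \<gamma> x0 \<pi> - vMF P r \<gamma> (emp N x0) \<pi>\<bar>
    \<le> LR * (sqrt (real CARD('u)) * lln_rate N) / (1 - \<gamma>)
      + S_R * ((2 * sqrt (real CARD('x)) + LP * sqrt (real CARD('u))) * lln_rate N) / (S_P - 1)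
        * (1 / (1 - \<gamma> * S_P) - 1 / (1 - \<gamma>))"
proof -
  let ?c = "(2 * sqrt (real CARD('x)) + LP * sqrt (real CARD('u))) * lln_rate N"
  have \<gamma>1: "\<gamma> < 1"
    using mult_left_mono[of 1 S_P \<gamma>] \<gamma> contraction expansion by linarith
  have gap: "\<bar>reward_N N P r \<pi> x0 t - reward_MF P r (emp N x0) \<pi> t\<bar>
      \<le> LR * (sqrt (real CARD('u)) * lln_rate N) + S_R * ?c * (\<Sum>i<t. S_P ^ i)" for t
    using reward_gap_le[of x0 t] mult_left_mono[OF mf_error_le[of x0 t] S_R_nonneg]
    by (simp add: mult.assoc)
  show ?thesis
    unfolding vN_eq_suminf[OF \<gamma> \<gamma>1] vMF_eq_suminf[OF \<gamma> \<gamma>1]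
    by (rule discounted_suminf_diff_le[OF \<gamma> \<gamma>1 expansion contraction abs_reward_N_le abs_reward_MF_le gap])
qed

end

lemma sqrt_card_sum_le:
  assumes "0 \<le> L"
  shows "2 * sqrt (real CARD('a::finite)) + L * sqrt (real CARD('b::finite))
           \<le> (2 + L) * sqrt (real CARD('a) * real CARD('b))"
proof -
  have "sqrt (real CARD('a)) \<le> sqrt (real CARD('a) * real CARD('b))"
    by (simp add: Suc_leI)
  moreover have "L * sqrt (real CARD('b)) \<le> L * sqrt (real CARD('a) * real CARD('b))"
    using assms by (intro mult_left_mono) (simp_all add: Suc_leI)
  ultimately show ?thesis
    unfolding distrib_right by linarith
qed

theorem theorem1:
  fixes N :: "'k::finite \<Rightarrow> nat"
    and P :: "('x::finite,'u::finite,'k) trans"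
    and r :: "('x,'u,'k) rew"
    and MR LR LP LQ \<gamma> :: real
    and x0 :: "'k \<times> nat \<Rightarrow> 'x"
    and \<pi> :: "('x,'u,'k) policy"
  assumes N_pos: "\<forall>k. 1 \<le> N k"
    and MR_pos: "MR > 0" and LR_pos: "LR > 0" and LP_pos: "LP > 0" and LQ_pos: "LQ > 0"
    and gamma: "0 \<le> \<gamma>" "\<gamma> < 1"
    and r_bound: "\<forall>k x u \<mu> \<nu>. \<mu> \<in> dist_simplex \<longrightarrow> \<nu> \<in> dist_simplex \<longrightarrow> \<bar>r k x u \<mu> \<nu>\<bar> \<le> MR"
    and r_lip: "\<forall>k x u \<mu>1 \<mu>2 \<nu>1 \<nu>2. \<mu>1 \<in> dist_simplex \<longrightarrow> \<mu>2 \<in> dist_simplex \<longrightarrow> \<nu>1 \<in> dist_simplex \<longrightarrow> \<nu>2 \<in> dist_simplex \<longrightarrow>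
        \<bar>r k x u \<mu>1 \<nu>1 - r k x u \<mu>2 \<nu>2\<bar> \<le> LR * (l1 \<mu>1 \<mu>2 + l1 \<nu>1 \<nu>2)"
    and P_lip: "\<forall>k x u \<mu>1 \<mu>2 \<nu>1 \<nu>2. \<mu>1 \<in> dist_simplex \<longrightarrow> \<mu>2 \<in> dist_simplex \<longrightarrow> \<nu>1 \<in> dist_simplex \<longrightarrow> \<nu>2 \<in> dist_simplex \<longrightarrow>
        l1_pmf (P k x u \<mu>1 \<nu>1) (P k x u \<mu>2 \<nu>2) \<le> LP * (l1 \<mu>1 \<mu>2 + l1 \<nu>1 \<nu>2)"
    and contr: "\<gamma> * ((1 + LQ) + LP * (2 + LQ)) < 1"
    and pi_in: "\<pi> \<in> Pi_class LQ"
  shows "(let SR = MR * (1 + LQ) + LR * (2 + LQ);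
              SP = (1 + LQ) + LP * (2 + LQ);
              CR = MR + LR;
              CP = 2 + LP;
              A = (1 / real (Npop N)) * (\<Sum>k\<in>UNIV. sqrt (real (N k)))
          in \<bar>vN N P r \<gamma> x0 \<pi> - vMF P r \<gamma> (emp N x0) \<pi>\<bar>
             \<le> CR / (1 - \<gamma>) * sqrt (real CARD('u)) * A
               + CP * (SR / (SP - 1)) * sqrt (real CARD('x) * real CARD('u)) * A
                 * (1 / (1 - \<gamma> * SP) - 1 / (1 - \<gamma>)))"
proof -
  interpret mf_system P r MR LR LP LQ \<pi> N
    using assms by unfold_locales (auto simp: Pi_class_def)
  \<comment> \<open>\<open>value_gap_le\<close> is sharper: \<open>L\<^sub>R\<close> instead of \<open>M\<^sub>R + L\<^sub>R\<close>, and
    \<open>2 \<surd>|X| + L\<^sub>P \<surd>|U|\<close> instead of \<open>(2 + L\<^sub>P) \<surd>(|X| |U|)\<close>.\<close>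
  have expansion: "1 < S_P"
    using LQ_pos LP_pos by (simp add: add_pos_pos)
  have rate: "0 \<le> lln_rate N"
    by (simp add: lln_rate_def sum_nonneg)
  have weight: "0 \<le> S_R / (S_P - 1) * (1 / (1 - \<gamma> * S_P) - 1 / (1 - \<gamma>))"
    using S_R_nonneg expansion gamma contr mult_left_mono[of 1 S_P \<gamma>]
    by (intro mult_nonneg_nonneg divide_nonneg_nonneg) (simp_all add: frac_le)
  have "LR * (sqrt (real CARD('u)) * lln_rate N) / (1 - \<gamma>) \<le> (MR + LR) / (1 - \<gamma>) * sqrt (real CARD('u)) * lln_rate N"
    using MR_pos rate gamma by (simp add: divide_right_mono mult_right_mono)
  moreover have "S_R * ((2 * sqrt (real CARD('x)) + LP * sqrt (real CARD('u))) * lln_rate N) / (S_P - 1)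
        * (1 / (1 - \<gamma> * S_P) - 1 / (1 - \<gamma>))
      \<le> (2 + LP) * (S_R / (S_P - 1)) * sqrt (real CARD('x) * real CARD('u)) * lln_rate N
        * (1 / (1 - \<gamma> * S_P) - 1 / (1 - \<gamma>))"
    using mult_right_mono[OF mult_right_mono[OF sqrt_card_sum_le[OF LP_nonneg, where 'a = 'x and 'b = 'u] rate] weight]
    by (simp add: mult_ac)
  ultimately show ?thesis
    using value_gap_le[OF gamma(1) contr expansion, of x0] unfolding Let_def lln_rate_def by linarith
qed

end
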